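(* Let $d\geq 1$, $S=\mathbb{R}^d$, and let $X=(X_u,u\in\mathbb{T})$ be a bifurcating Markov chain on $S$ with initial distribution $\nu$ and probability kernel $\mathcal{P}$, with induced kernel $\mathcal{Q}=\frac12(P_0+P_1)$. Assume: (A1) (Geometric ergodicity) $\mathcal{Q}$ has a unique invariant probability measure $\mu$, and there exist $\alpha\in(0,1)$ and a finite $M$ such that for all $f\in L^2(\mu)$ and all $n\in\mathbb{N}$, $\|\mathcal{Q}^n f-\langle\mu,f\rangle\|_{L^2(\mu)}\leq M\alpha^n\|f\|_{L^2(\mu)}$. (A2) (Regularity of $\mathcal{P}$ and $\nu$) (i) $\mathcal{P}$ has a density $p$ with respect to $\mu^{\otimes 2}$: $\mathcal{P}(x,dy,dz)=p(x,y,z)\,\mu(dy)\mu(dz)$ for all $x\in S$; (ii) the function $\mathfrak{h}(x)=\left(\int_S q(x,y)^2\,\mu(dy)\right)^{1/2}$ belongs to $L^2(\mu)$, where $q(x,y)=\frac12\int_S (p(x,y,z)+p(x,z,y))\,\mu(dz)$ is the density of $\mathcal{Q}$ with respect to $\mu$; (iii) there exists $k_1\geq 1$ such that $\mathfrak{h}_{k_1}:=\mathcal{Q}^{k_1-1}\mathfrak{h}\in L^6(\mu)$; (iv) there exists $k_0\in\mathbb{N}$ such that $\nu\mathcal{Q}^{k_0}(dy)=\nu_0(y)\mu(dy)$ with $\|\nu_0\|_\infty<+\infty$. (A3) (Density of $\mu$, integrability) $\mu$ has a density with respect to Lebesgue measure, still denoted $\mu$, and the following constants are finite: $C_0=\sup_{x,y\in\mathbb{R}^d}\big(\mu(x)+q(x,y)\mu(y)\big)$,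 $C_1=\sup_{y,z\in\mathbb{R}^d}\int_{\mathbb{R}^d}\mu(x)\mu(y)\mu(z)p(x,y,z)\,dx$, $C_2=\int_{\mathbb{R}^d}\mu(x)\sup_{z\in\mathbb{R}^d}\left(\int_{\mathbb{R}^d}\mu(y)\mathfrak{h}(y)\mu(z)\big(p(x,y,z)+p(x,z,y)\big)\,dy\right)^2dx$. (A4) (Kernel and bandwidths) $K\in\mathcal{B}(\mathbb{R}^d)$ satisfies $\|K\|_\infty<\infty$, $\int|K|<\infty$, $\int K^2<\infty$, $\int_{\mathbb{R}^d}K(x)\,dx=1$ and $\lim_{|x|\to\infty}|x|K(x)=0$; and $h_n=2^{-n\gamma}$ for some $\gamma\in(0,1/d)$. (A5) There exists $s>0$ such that: (i) $\mu$ admits partial derivatives with respect to each $x_j$, $j\in\{1,\dots,d\}$, up to order $\lfloor s\rfloor$, and there is a finite $L>0$ with $\left|\frac{\partial^{\lfloor s\rfloor}\mu}{\partial x_j^{\lfloor s\rfloor}}(x_{-j},t)-\frac{\partial^{\lfloor s\rfloor}\mu}{\partial x_j^{\lfloor s\rfloor}}(x)\right|\leq L|x_j-t|^{s-\lfloor s\rfloor}$ for all $x\in\mathbb{R}^d$, $t\in\mathbb{R}$, $j\in\{1,\dots,d\}$ (where $(x_{-j},t)$ is $x$ with its $j$-th coordinate replaced by $t$, and $\partial^0\mu/\partial x_j^0=\mu$); (ii) $\int_{\mathbb{R}^d}|x|^sK(x)\,dx<\infty$ and $\int_{\mathbb{R}}x_j^kK(x)\,dx_j=0$ for all $k\in\{1,\dots,\lfloor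 s\rfloor\}$ and $j\in\{1,\dots,d\}$; (iii) $\gamma>1/(2s+d)$, i.e. $\lim_{n\to\infty}2^n h_n^{2s+d}=0$. Furthermore, if $\alpha>1/\sqrt2$, assume $2^{d\gamma}>2\alpha^2$. Then for every $x$ at which $\mu$ is continuous and for $\mathbb{A}_n\in\{\mathbb{G}_n,\mathbb{T}_n\}$, $\widehat{\mu}_{\mathbb{A}_n}(x)\to\mu(x)$ in probability as $n\to\infty$, where $\widehat{\mu}_{\mathbb{A}_n}(x)=|\mathbb{A}_n|^{-1}h_n^{-d/2}\sum_{u\in\mathbb{A}_n}K_{h_n}(x-X_u)$ and $K_h(y)=h^{-d/2}K(h^{-1}y)$.
   Context: Binary tree notation: $\mathbb{G}_0=\{\emptyset\}$, $\mathbb{G}_k=\{0,1\}^k$ (generation $k$), $\mathbb{T}_k=\bigcup_{0\le r\le k}\mathbb{G}_r$, $\mathbb{T}=\bigcup_{r}\mathbb{G}_r$; for $i\in\mathbb{T}$, $i0,i1$ are its children (concatenation). A bifurcating Markov chain (BMC) on a measurable space $(S,\mathscr{S})$ with initial distribution $\nu$ and probability kernel $\mathcal{P}$ on $S\times\mathscr{S}^{\otimes 2}$ is a process $X=(X_i,i\in\mathbb{T})$ with $X_\emptyset\sim\nu$ and such that for every family $(g_i)$ of bounded measurable functions on $S^3$ and all $k\ge0$, $\mathbb{E}[\prod_{i\in\mathbb{G}_k}g_i(X_i,X_{i0},X_{i1})\mid \sigma(X_j;j\in\mathbb{T}_k)]=\prod_{i\in\mathbb{G}_k}\mathcal{P}g_i(X_i)$,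 where $\mathcal{P}g(x)=\int g(x,y,z)\mathcal{P}(x,dy,dz)$. Define kernels $P_0(x,A)=\mathcal{P}(x,A\times S)$, $P_1(x,A)=\mathcal{P}(x,S\times A)$, $\mathcal{Q}=\frac12(P_0+P_1)$; $\mathcal{Q}f(x)=\int f(y)\mathcal{Q}(x,dy)$, $\mathcal{Q}^n$ its iterates, and $\nu\mathcal{Q}^k$ the measure $A\mapsto\int\nu(dx)\mathcal{Q}^k(x,A)$. $\langle\mu,f\rangle=\int f\,d\mu$. For $s\ge0$, $\lfloor s\rfloor$ is its integer part. *)

theory Defs
  imports "HOL-Probability.Probability"
begin

text \<open>Vertices of the binary tree are bit lists; the children of u are u@[False] (u0)
  and u@[True] (u1); the root is the empty list.\<close>

definition Gen :: "nat \<Rightarrow> bool list set" where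
  "Gen k = {u. length u = k}"

definition Tree :: "nat \<Rightarrow> bool list set" where
  "Tree k = {u. length u \<le> k}"

definition Pop :: "('x \<Rightarrow> ('x \<times> 'x) measure) \<Rightarrow> ('x \<Rightarrow> 'x \<Rightarrow> 'x \<Rightarrow> real) \<Rightarrow> 'x \<Rightarrow> real" where
  "Pop P g x = (\<integral> yz. g x (fst yz) (snd yz) \<partial>(P x))"

definition P0 :: "('x::topological_space \<Rightarrow> ('x \<times> 'x) measure) \<Rightarrow> 'x \<Rightarrow> 'x measure" where
  "P0 P x = distr (P x) borel fst"

definition P1 :: "('x::topological_space \<Rightarrow> ('x \<times> 'x) measure) \<Rightarrow> 'x \<Rightarrow> 'x measure" where
  "P1 P x = distr (P x) borel snd"

definition Qk :: "('x::topological_space \<Rightarrow> ('x \<times> 'x) measure) \<Rightarrow> 'x \<Rightarrow> 'x measure" where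
  "Qk P x = measure_of UNIV (sets borel) (\<lambda>A. (emeasure (P0 P x) A + emeasure (P1 P x) A) / 2)"

fun Qn :: "('x::topological_space \<Rightarrow> ('x \<times> 'x) measure) \<Rightarrow> nat \<Rightarrow> 'x \<Rightarrow> 'x measure" where
  "Qn P 0 x = return borel x"
| "Qn P (Suc n) x = measure_of UNIV (sets borel) (\<lambda>A. \<integral>\<^sup>+ y. emeasure (Qk P y) A \<partial>(Qn P n x))"

definition Qpow :: "('x::topological_space \<Rightarrow> ('x \<times> 'x) measure) \<Rightarrow> nat \<Rightarrow> ('x \<Rightarrow> real) \<Rightarrow> 'x \<Rightarrow> real" where
  "Qpow P n f x = (\<integral> y. f y \<partial>(Qn P n x))"

definition mQn :: "'x measure \<Rightarrow> ('x::topological_space \<Rightarrow> ('x \<times> 'x) measure) \<Rightarrow> nat \<Rightarrow> 'x measure" where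
  "mQn \<nu> P k = measure_of UNIV (sets borel) (\<lambda>A. \<integral>\<^sup>+ x. emeasure (Qn P k x) A \<partial>\<nu>)"

definition Q_invariant_prob :: "('x::topological_space \<Rightarrow> ('x \<times> 'x) measure) \<Rightarrow> 'x measure \<Rightarrow> bool" where
  "Q_invariant_prob P m \<longleftrightarrow> prob_space m \<and> sets m = sets borel \<and>
     (\<forall>A\<in>sets borel. (\<integral>\<^sup>+ x. emeasure (Qk P x) A \<partial>m) = emeasure m A)"

definition tree_sigma :: "'a measure \<Rightarrow> (bool list \<Rightarrow> 'a \<Rightarrow> 'x::topological_space) \<Rightarrow> nat \<Rightarrow> 'a measure" where
  "tree_sigma M X k = sigma (space M) {X j -` B \<inter> space M | j B. j \<in> Tree k \<and> B \<in> sets borel}"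

definition bmc :: "'a measure \<Rightarrow> (bool list \<Rightarrow> 'a \<Rightarrow> 'x::{second_countable_topology,topological_space})
     \<Rightarrow> 'x measure \<Rightarrow> ('x \<Rightarrow> ('x \<times> 'x) measure) \<Rightarrow> bool" where
  "bmc M X \<nu> P \<longleftrightarrow>
     prob_space M \<and>
     P \<in> borel \<rightarrow>\<^sub>M prob_algebra (borel \<Otimes>\<^sub>M borel) \<and>
     (\<forall>u. X u \<in> M \<rightarrow>\<^sub>M borel) \<and>
     distr M borel (X []) = \<nu> \<and>
     (\<forall>k (g :: bool list \<Rightarrow> 'x \<Rightarrow> 'x \<Rightarrow> 'x \<Rightarrow> real).
        (\<forall>i\<in>Gen k. (\<lambda>(x, y, z). g i x y z) \<in> borel_measurable borel \<and>
                    (\<exists>B. \<forall>x y z. \<bar>g i x y z\<bar> \<le> B)) \<longrightarrow>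
        (AE \<omega> in M.
           real_cond_exp M (tree_sigma M X k)
              (\<lambda>\<omega>. \<Prod>i\<in>Gen k. g i (X i \<omega>) (X (i @ [False]) \<omega>) (X (i @ [True]) \<omega>)) \<omega>
           = (\<Prod>i\<in>Gen k. Pop P (g i) (X i \<omega>))))"

definition upd :: "real ^ 'd \<Rightarrow> 'd \<Rightarrow> real \<Rightarrow> real ^ 'd" where
  "upd x j t = (\<chi> i. if i = j then t else x $ i)"

fun pdiff :: "'d \<Rightarrow> nat \<Rightarrow> (real ^ 'd \<Rightarrow> real) \<Rightarrow> real ^ 'd \<Rightarrow> real" where
  "pdiff j 0 g = g"
| "pdiff j (Suc m) g = (\<lambda>x. deriv (\<lambda>t. pdiff j m g (upd x j t)) (x $ j))"

definition Kh :: "(real ^ 'd \<Rightarrow> real) \<Rightarrow> real \<Rightarrow> real ^ 'd \<Rightarrow> real" where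
  "Kh K h y = h powr (- (real CARD('d) / 2)) * K ((1 / h) *\<^sub>R y)"

definition mu_hat :: "(real ^ 'd \<Rightarrow> real) \<Rightarrow> (nat \<Rightarrow> real) \<Rightarrow> (bool list \<Rightarrow> 'a \<Rightarrow> real ^ 'd)
     \<Rightarrow> bool list set \<Rightarrow> nat \<Rightarrow> real ^ 'd \<Rightarrow> 'a \<Rightarrow> real" where
  "mu_hat K h X A n x \<omega> =
     (1 / real (card A)) * h n powr (- (real CARD('d) / 2)) * (\<Sum>u\<in>A. Kh K (h n) (x - X u \<omega>))"

end

theory Submission
  imports Defs
begin

text \<open>
  Write the estimation error \<open>\<mu>\<^sub>n(x) - \<mu>(x)\<close> as the average of \<open>\<phi>\<^sub>n(X_u)\<close> over \<open>u \<in> \<bbbA>\<^sub>n\<close> plus the bias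
  \<open>\<mu>(F\<^sub>n) - \<mu>(x)\<close>, where \<open>F\<^sub>n = h\<^sub>n^(-d) K((x - \<cdot>)/h\<^sub>n)\<close> and \<open>\<phi>\<^sub>n = F\<^sub>n - \<mu>(F\<^sub>n)\<close>.
  The bias vanishes by dominated convergence, \<open>\<mu>\<close> being bounded (by (A3)) and continuous at \<open>x\<close>.

  For the fluctuation, condition generation by generation: the children of a vertex \<open>u\<close>
  contribute \<open>\<psi>(X_u0) + \<psi>(X_u1) - 2 Q\<psi>(X_u)\<close>, which has conditional mean zero, and these
  increments are conditionally uncorrelated across the vertices of a generation. This yields
  \<open>E[(\<Sum>u\<in>G_k. \<phi>(X_u))^2] \<le> \<Sum>j\<le>k. 2^(j+1) 4^(k-j) \<nu>Q^j((Q^(k-j) \<phi>)^2)\<close>.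
  Since \<open>Q\<close> has the density \<open>q\<close> with \<open>q(x,y) \<mu>(y) \<le> C\<^sub>0\<close>, \<open>Q F\<^sub>n\<close> is bounded by \<open>C\<^sub>0 \<parallel>K\<parallel>\<^sub>1\<close>
  uniformly in \<open>n\<close>. With the \<open>L\<^sup>2(\<mu>)\<close> ergodicity (A1) and the bounded density of \<open>\<nu>Q^k\<^sub>0\<close>
  (A2 iv), the terms with \<open>j < k\<close> decay like \<open>\<alpha>^(2(k-j))\<close>, while those with \<open>j = k\<close> are
  \<open>O(h\<^sub>n^(-d))\<close>. The second moment of the normalised fluctuation is therefore
  \<open>O(2^(-n) h\<^sub>n^(-d) + n\<^sup>2 \<rho>^n)\<close> with \<open>\<rho> = max(1/2, \<alpha>\<^sup>2) < 1\<close>, which tends to zero because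
  \<open>\<gamma>d < 1\<close>; Chebyshev's inequality concludes.

  Only (A1) without uniqueness, (A2 i, iv), the constant \<open>C\<^sub>0\<close> of (A3) and the boundedness,
  integrability and normalisation of \<open>K\<close> are used; the other hypotheses serve the paper's
  central limit theorem, not consistency.
\<close>

lemma measurable_fst_borel[measurable]:
  "fst \<in> (borel :: ('a::second_countable_topology \<times> 'b::second_countable_topology) measure) \<rightarrow>\<^sub>M borel"
  by (subst borel_prod[symmetric]) simp

lemma measurable_snd_borel[measurable]:
  "snd \<in> (borel :: ('a::second_countable_topology \<times> 'b::second_countable_topology) measure) \<rightarrow>\<^sub>M borel"
  by (subst borel_prod[symmetric]) simp

lemma measurable_Pair_borel[measurable]:
  "f \<in> M \<rightarrow>\<^sub>M borel \<Longrightarrow> g \<in> M \<rightarrow>\<^sub>M borel \<Longrightarrow>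
    (\<lambda>x. (f x, g x)) \<in> M \<rightarrow>\<^sub>M (borel :: ('a::second_countable_topology \<times> 'b::second_countable_topology) measure)"
  by (subst borel_prod[symmetric]) simp

lemma borel_measurable_section3:
  fixes g :: "'a::second_countable_topology \<Rightarrow> 'b::second_countable_topology \<Rightarrow> 'c::second_countable_topology \<Rightarrow> real"
  assumes "(\<lambda>(x, y, z). g x y z) \<in> borel_measurable borel"
  shows "(\<lambda>yz. g x (fst yz) (snd yz)) \<in> borel_measurable borel"
proof -
  have "(\<lambda>yz. (x, yz)) \<in> (borel :: ('b \<times> 'c) measure) \<rightarrow>\<^sub>M (borel :: ('a \<times> 'b \<times> 'c) measure)"
    by (intro borel_measurable_continuous_onI continuous_intros)
  from measurable_comp[OF this assms] show ?thesis by (simp add: o_def case_prod_beta)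
qed

definition bounded_measurable :: "('x::topological_space \<Rightarrow> real) \<Rightarrow> real \<Rightarrow> bool" where
  "bounded_measurable f B \<longleftrightarrow> f \<in> borel_measurable borel \<and> (\<forall>x. \<bar>f x\<bar> \<le> B)"

lemma bounded_measurableD:
  "bounded_measurable f B \<Longrightarrow> f \<in> borel_measurable borel"
  "bounded_measurable f B \<Longrightarrow> \<bar>f x\<bar> \<le> B"
  by (auto simp: bounded_measurable_def)

lemma square_le_of_abs_le: "\<bar>a\<bar> \<le> (B::real) \<Longrightarrow> a\<^sup>2 \<le> B\<^sup>2"
  by (metis abs_ge_zero abs_le_square_iff abs_of_nonneg order_trans)

lemma bounded_measurable_square:
  "bounded_measurable f B \<Longrightarrow> bounded_measurable (\<lambda>y. (f y)\<^sup>2) (B\<^sup>2)"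
  unfolding bounded_measurable_def by (auto simp: square_le_of_abs_le)

lemma bounded_measurable_affine:
  "bounded_measurable f B \<Longrightarrow> bounded_measurable (\<lambda>y. c * f y + d) (\<bar>c\<bar> * B + \<bar>d\<bar>)"
  unfolding bounded_measurable_def
  by (auto intro!: order.trans[OF abs_triangle_ineq] add_mono simp: abs_mult mult_left_mono)

lemma prob_space_integrable_bounded:
  fixes f :: "'a \<Rightarrow> real"
  assumes "prob_space N" "f \<in> borel_measurable N" "\<And>x. \<bar>f x\<bar> \<le> B"
  shows "integrable N f"
proof -
  interpret prob_space N by fact
  show ?thesis by (rule integrable_const_bound[where B=B]) (use assms in auto)
qed

lemma prob_space_abs_integral_le:
  fixes f :: "'a \<Rightarrow> real"
  assumes "prob_space N" "f \<in> borel_measurable N" "\<And>x. \<bar>f x\<bar> \<le> B"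
  shows "\<bar>\<integral>x. f x \<partial>N\<bar> \<le> B"
proof -
  interpret prob_space N by fact
  have "integrable N f" by (rule prob_space_integrable_bounded[OF assms])
  have "\<bar>\<integral>x. f x \<partial>N\<bar> \<le> (\<integral>x. \<bar>f x\<bar> \<partial>N)" by (rule integral_abs_bound)
  also have "\<dots> \<le> B" using \<open>integrable N f\<close> assms(3) by (intro integral_le_const) auto
  finally show ?thesis .
qed

lemma prob_space_square_integral_le:
  fixes f :: "'a \<Rightarrow> real"
  assumes "prob_space N" and [measurable]: "f \<in> borel_measurable N" and "\<And>x. \<bar>f x\<bar> \<le> B"
  shows "(\<integral>x. f x \<partial>N)\<^sup>2 \<le> (\<integral>x. (f x)\<^sup>2 \<partial>N)"
proof -
  interpret prob_space N by fact
  have "integrable N f" by (rule prob_space_integrable_bounded[OF assms])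
  moreover have "integrable N (\<lambda>x. (f x)\<^sup>2)"
    by (rule prob_space_integrable_bounded[OF assms(1), where B="B\<^sup>2"])
       (use assms(3) in \<open>auto simp: square_le_of_abs_le\<close>)
  ultimately show ?thesis using variance_eq variance_positive[of f] by simp
qed

lemma measure_of_nn_integral_emeasure_eq_bind:
  fixes K :: "'b \<Rightarrow> 'x::topological_space measure"
  assumes ne: "space N \<noteq> {}" and K: "K \<in> N \<rightarrow>\<^sub>M subprob_algebra borel"
  shows "measure_of UNIV (sets borel) (\<lambda>A. \<integral>\<^sup>+y. emeasure (K y) A \<partial>N) = N \<bind> K"
proof -
  have "measure_of UNIV (sets borel) (\<lambda>A. \<integral>\<^sup>+y. emeasure (K y) A \<partial>N)
      = measure_of UNIV (sets borel) (emeasure (N \<bind> K))"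
  proof (rule measure_of_eq)
    fix A assume "A \<in> sigma_sets UNIV (sets (borel :: 'x measure))"
    then have "A \<in> sets borel" by (metis sets.sigma_sets_eq space_borel)
    then show "(\<integral>\<^sup>+y. emeasure (K y) A \<partial>N) = emeasure (N \<bind> K) A"
      by (rule emeasure_bind[OF ne K, symmetric])
  qed simp
  also have "\<dots> = N \<bind> K"
    using measure_of_of_measure[of "N \<bind> K"] sets_bind[OF sets_kernel[OF K] ne]
      space_bind[OF sets_kernel[OF K] ne]
    by simp
  finally show ?thesis .
qed

lemma lborel_integral_rescale:
  fixes g :: "real^'d::finite \<Rightarrow> real"
  assumes h: "h > 0" and [measurable]: "g \<in> borel_measurable borel"
  shows "(\<integral>y. g ((1/h) *\<^sub>R (x0 - y)) \<partial>lborel) = h ^ CARD('d) * (\<integral>t. g t \<partial>lborel)"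
    and "integrable lborel (\<lambda>y. g ((1/h) *\<^sub>R (x0 - y))) \<longleftrightarrow> integrable lborel g"
proof -
  have "-h \<noteq> 0" using h by simp
  from lborel_affine[OF this, of x0]
  have *: "lborel = density (distr lborel borel (\<lambda>t. x0 + (-h) *\<^sub>R t)) (\<lambda>_. ennreal (h ^ CARD('d)))"
    using h by simp
  show "(\<integral>y. g ((1/h) *\<^sub>R (x0 - y)) \<partial>lborel) = h ^ CARD('d) * (\<integral>t. g t \<partial>lborel)"
    by (subst *) (use h in \<open>simp add: integral_density integral_distr scaleR_diff_right\<close>)
  show "integrable lborel (\<lambda>y. g ((1/h) *\<^sub>R (x0 - y))) \<longleftrightarrow> integrable lborel g"
    by (subst *) (use h in \<open>simp add: integrable_density integrable_distr_eq scaleR_diff_right\<close>)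
qed

lemma borel_measurable_triple:
  fixes g :: "'a::second_countable_topology \<Rightarrow> 'b::second_countable_topology \<Rightarrow> 'c::second_countable_topology \<Rightarrow> real"
  assumes "(\<lambda>(x, y, z). g x y z) \<in> borel_measurable (borel \<Otimes>\<^sub>M (borel \<Otimes>\<^sub>M borel))"
  shows "(\<lambda>(x, y, z). g x y z) \<in> borel_measurable borel"
  using assms by (simp add: borel_prod)

definition bounded_real :: "('b \<Rightarrow> real) \<Rightarrow> bool" where
  "bounded_real F \<longleftrightarrow> (\<exists>C. \<forall>\<omega>. \<bar>F \<omega>\<bar> \<le> C)"

lemma bounded_real_const[simp]: "bounded_real (\<lambda>_. c)"
  unfolding bounded_real_def by auto

lemma bounded_real_add: "bounded_real F \<Longrightarrow> bounded_real G \<Longrightarrow> bounded_real (\<lambda>\<omega>. F \<omega> + G \<omega>)"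
  unfolding bounded_real_def by (metis abs_triangle_ineq add_mono order_trans)

lemma bounded_real_mult: "bounded_real F \<Longrightarrow> bounded_real G \<Longrightarrow> bounded_real (\<lambda>\<omega>. F \<omega> * G \<omega>)"
  unfolding bounded_real_def by (metis abs_ge_zero abs_mult mult_mono')

lemma bounded_real_power2: "bounded_real F \<Longrightarrow> bounded_real (\<lambda>\<omega>. (F \<omega>)\<^sup>2)"
  using bounded_real_mult[of F F] by (simp add: power2_eq_square)

lemma bounded_real_divide: "bounded_real F \<Longrightarrow> bounded_real (\<lambda>\<omega>. F \<omega> / c)"
  using bounded_real_mult[of F "\<lambda>_. 1 / c"] by simp

lemma bounded_real_sum: "(\<And>i. i \<in> I \<Longrightarrow> bounded_real (F i)) \<Longrightarrow> bounded_real (\<lambda>\<omega>. \<Sum>i\<in>I. F i \<omega>)"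
  by (induction I rule: infinite_finite_induct) (auto intro: bounded_real_add)

lemma four_power_eq: "(4::real) ^ n = 2 ^ n * 2 ^ n"
  by (simp flip: power_mult_distrib)

lemma ennreal_two_times_half: "(2::ennreal) * (a / 2) = a"
proof -
  have "(2::ennreal) * (a / 2) = (a * 2) / 2" by (simp add: ennreal_times_divide mult.commute)
  also have "\<dots> = a" by (rule ennreal_mult_divide_eq) simp_all
  finally show ?thesis .
qed

lemma square_sum_le: "((a::real) + b)\<^sup>2 \<le> 2 * a\<^sup>2 + 2 * b\<^sup>2"
  using sum_squares_bound[of a b] by (simp add: power2_sum)

lemma kernel_smoothing_tendsto:
  fixes K mu :: "real^'d::finite \<Rightarrow> real" and h :: "nat \<Rightarrow> real"
  assumes [measurable]: "K \<in> borel_measurable borel" "mu \<in> borel_measurable borel"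
    and K: "integrable lborel K" and mu_bound: "\<And>y. \<bar>mu y\<bar> \<le> C"
    and cont: "isCont mu x0" and h_pos: "\<And>n. h n > 0" and h: "h \<longlonglongrightarrow> 0"
  shows "(\<lambda>n. \<integral>y. K ((1 / h n) *\<^sub>R (x0 - y)) * mu y / h n ^ CARD('d) \<partial>lborel) \<longlonglongrightarrow> (\<integral>t. K t \<partial>lborel) * mu x0"
proof -
  have "(\<integral>y. K ((1 / h n) *\<^sub>R (x0 - y)) * mu y / h n ^ CARD('d) \<partial>lborel) = (\<integral>t. K t * mu (x0 - h n *\<^sub>R t) \<partial>lborel)"
    for n
    using lborel_integral_rescale(1)[OF h_pos[of n], of "\<lambda>t. K t * mu (x0 - h n *\<^sub>R t)" x0] h_pos[of n]
    by (simp add: scaleR_diff_right)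
  moreover have "(\<lambda>n. \<integral>t. K t * mu (x0 - h n *\<^sub>R t) \<partial>lborel) \<longlonglongrightarrow> (\<integral>t. K t * mu x0 \<partial>lborel)"
  proof (rule integral_dominated_convergence[where w="\<lambda>t. \<bar>K t\<bar> * C"])
    have "(\<lambda>n. x0 - h n *\<^sub>R t) \<longlonglongrightarrow> x0" for t
      using tendsto_diff[OF tendsto_const tendsto_scaleR[OF h tendsto_const], of x0 t] by simp
    then show "AE t in lborel. (\<lambda>n. K t * mu (x0 - h n *\<^sub>R t)) \<longlonglongrightarrow> K t * mu x0"
      using cont by (intro AE_I2 tendsto_mult tendsto_const) (rule isCont_tendsto_compose)
    show "AE t in lborel. norm (K t * mu (x0 - h n *\<^sub>R t)) \<le> \<bar>K t\<bar> * C" for n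
      by (intro AE_I2) (simp add: abs_mult mult_left_mono mu_bound)
  qed (use K in simp_all)
  ultimately show ?thesis by simp
qed

lemma square_sum_le_weighted:
  fixes S :: "nat \<Rightarrow> real"
  shows "(\<Sum>k\<in>{1..n}. S k)\<^sup>2 \<le> 2 ^ (n + 1) * (\<Sum>k\<in>{1..n}. (S k)\<^sup>2 / 2 ^ k)"
proof -
  have "(\<Sum>k\<in>{1..n}. S k)\<^sup>2 = (\<Sum>k\<in>{1..n}. sqrt (2 ^ k) * (S k / sqrt (2 ^ k)))\<^sup>2"
    by simp
  also have "\<dots> \<le> (\<Sum>k\<in>{1..n}. (sqrt (2 ^ k))\<^sup>2) * (\<Sum>k\<in>{1..n}. (S k / sqrt (2 ^ k))\<^sup>2)"
    by (rule Cauchy_Schwarz_ineq_sum)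
  also have "\<dots> = (\<Sum>k\<in>{1..n}. 2 ^ k) * (\<Sum>k\<in>{1..n}. (S k)\<^sup>2 / 2 ^ k)"
    by (simp add: power_divide)
  also have "\<dots> \<le> 2 ^ (n + 1) * (\<Sum>k\<in>{1..n}. (S k)\<^sup>2 / 2 ^ k)"
  proof (rule mult_right_mono)
    have "(\<Sum>k\<in>{1..n}. (2::real) ^ k) \<le> (\<Sum>k\<le>n. 2 ^ k)" by (rule sum_mono2) auto
    also have "(\<Sum>k\<le>n. (2::real) ^ k) = 2 ^ (n + 1) - 1" by (induction n) auto
    finally show "(\<Sum>k\<in>{1..n}. (2::real) ^ k) \<le> 2 ^ (n + 1)" by simp
  qed (auto intro: sum_nonneg)
  finally show ?thesis .
qed

lemma tendsto_n_times_power_zero: "0 \<le> (x::real) \<Longrightarrow> x < 1 \<Longrightarrow> (\<lambda>n. real n * x ^ n) \<longlonglongrightarrow> 0"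
  using powser_times_n_limit_0[of x] by simp

lemma tendsto_n_square_times_power_zero:
  assumes "0 \<le> (x::real)" "x < 1"
  shows "(\<lambda>n. (real n)\<^sup>2 * x ^ n) \<longlonglongrightarrow> 0"
proof -
  have "(\<lambda>n. (real n * sqrt x ^ n)\<^sup>2) \<longlonglongrightarrow> 0\<^sup>2"
    using assms by (intro tendsto_power tendsto_n_times_power_zero) auto
  moreover have "(real n * sqrt x ^ n)\<^sup>2 = (real n)\<^sup>2 * x ^ n" for n
    using assms by (simp add: power_mult_distrib power_mult[symmetric] mult.commute[of n 2] power_mult real_sqrt_pow2)
  ultimately show ?thesis by simp
qed

lemma (in prob_space) deviation_tendsto_zero:
  fixes Z :: "nat \<Rightarrow> 'a \<Rightarrow> real"
  assumes [measurable]: "\<And>n. Z n \<in> borel_measurable M"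
    and Z2: "\<And>n. integrable M (\<lambda>\<omega>. (Z n \<omega>)\<^sup>2)"
    and bound: "eventually (\<lambda>n. (\<integral>\<omega>. (Z n \<omega>)\<^sup>2 \<partial>M) \<le> e n) sequentially"
    and e: "e \<longlonglongrightarrow> 0" and b: "b \<longlonglongrightarrow> 0" and \<epsilon>: "0 < \<epsilon>"
  shows "(\<lambda>n. measure M {\<omega> \<in> space M. \<epsilon> < \<bar>Z n \<omega> + b n\<bar>}) \<longlonglongrightarrow> 0"
proof (rule tendsto_sandwich[where f="\<lambda>_. 0" and h="\<lambda>n. e n / (\<epsilon>/2)\<^sup>2"])
  have "eventually (\<lambda>n. \<bar>b n\<bar> < \<epsilon>/2) sequentially"
    using tendsto_iff[THEN iffD1, OF b, rule_format, of "\<epsilon>/2"] \<epsilon> by (simp add: dist_real_def)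
  then show "eventually (\<lambda>n. measure M {\<omega> \<in> space M. \<epsilon> < \<bar>Z n \<omega> + b n\<bar>} \<le> e n / (\<epsilon>/2)\<^sup>2) sequentially"
    using bound
  proof eventually_elim
    case (elim n)
    then have "measure M {\<omega> \<in> space M. \<epsilon> < \<bar>Z n \<omega> + b n\<bar>} \<le> measure M {\<omega> \<in> space M. \<epsilon>/2 \<le> \<bar>Z n \<omega>\<bar>}"
      by (intro finite_measure_mono) auto
    also have "\<dots> \<le> (\<integral>\<omega>. (Z n \<omega>)^2 \<partial>M) / (\<epsilon>/2)\<^sup>2"
      using \<epsilon> Z2 by (intro second_moment_method) auto
    also have "\<dots> \<le> e n / (\<epsilon>/2)\<^sup>2" by (rule divide_right_mono[OF elim(2)]) simp
    finally show ?case .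
  qed
  show "(\<lambda>n. e n / (\<epsilon>/2)\<^sup>2) \<longlonglongrightarrow> 0" using tendsto_divide_zero[OF e] by simp
qed simp_all

section \<open>The binary tree\<close>

lemma finite_Gen[simp]: "finite (Gen k)"
  using finite_lists_length_eq[of "UNIV::bool set" k] by (simp add: Gen_def)

lemma card_Gen: "card (Gen k) = 2 ^ k"
  using card_lists_length_eq[of "UNIV::bool set" k] by (simp add: Gen_def)

lemma Gen_0: "Gen 0 = {[]}"
  by (auto simp: Gen_def)

lemma Gen_nonempty: "Gen k \<noteq> {}"
  using card_Gen[of k] by force

lemma Gen_subset_Tree: "Gen k \<subseteq> Tree k"
  by (auto simp: Gen_def Tree_def)

lemma Gen_Suc: "Gen (Suc k) = (\<lambda>i. i @ [False]) ` Gen k \<union> (\<lambda>i. i @ [True]) ` Gen k"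
proof (rule set_eqI)
  fix u show "u \<in> Gen (Suc k) \<longleftrightarrow> u \<in> (\<lambda>i. i @ [False]) ` Gen k \<union> (\<lambda>i. i @ [True]) ` Gen k"
  proof
    assume "u \<in> Gen (Suc k)"
    then have "length u = Suc k" by (simp add: Gen_def)
    then obtain i b where "u = i @ [b]" "length i = k"
      by (metis length_Suc_conv_rev length_rev rev.simps(2) rev_rev_ident)
    then show "u \<in> (\<lambda>i. i @ [False]) ` Gen k \<union> (\<lambda>i. i @ [True]) ` Gen k"
      by (cases b) (auto simp: Gen_def)
  qed (auto simp: Gen_def)
qed

lemma sum_Gen_Suc: "(\<Sum>u\<in>Gen (Suc k). F u) = (\<Sum>i\<in>Gen k. F (i @ [False]) + F (i @ [True]))"
proof -
  have "(\<lambda>i. i @ [False]) ` Gen k \<inter> (\<lambda>i. i @ [True]) ` Gen k = {}" by auto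
  then have "(\<Sum>u\<in>Gen (Suc k). F u)
      = (\<Sum>u\<in>(\<lambda>i. i @ [False]) ` Gen k. F u) + (\<Sum>u\<in>(\<lambda>i. i @ [True]) ` Gen k. F u)"
    unfolding Gen_Suc by (intro sum.union_disjoint) auto
  also have "\<dots> = (\<Sum>i\<in>Gen k. F (i @ [False])) + (\<Sum>i\<in>Gen k. F (i @ [True]))"
    by (subst sum.reindex, simp add: inj_on_def, subst sum.reindex, simp add: inj_on_def) simp
  finally show ?thesis by (simp add: sum.distrib)
qed

lemma Tree_eq_UN_Gen: "Tree n = (\<Union>k\<le>n. Gen k)"
  by (auto simp: Tree_def Gen_def)

lemma finite_Tree: "finite (Tree n)"
  unfolding Tree_eq_UN_Gen using finite_Gen by blast

lemma Tree_nonempty: "Tree n \<noteq> {}"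
  using Gen_subset_Tree Gen_nonempty by blast

lemma sum_Tree: "(\<Sum>u\<in>Tree n. F u) = (\<Sum>k\<le>n. \<Sum>u\<in>Gen k. F u)"
  unfolding Tree_eq_UN_Gen by (rule sum.UNION_disjoint) (simp_all, auto simp: Gen_def)

lemma card_Tree: "card (Tree n) = 2 ^ Suc n - 1"
proof -
  have "card (Tree n) = (\<Sum>k\<le>n. card (Gen k))"
    using sum_Tree[of "\<lambda>_. 1::nat" n] by simp
  also have "\<dots> = (\<Sum>k\<le>n. 2 ^ k)" by (simp add: card_Gen)
  also have "\<dots> = 2 ^ Suc n - 1" by (induction n) auto
  finally show ?thesis .
qed

section \<open>Transition kernels with a density\<close>

locale density_kernel =
  fixes P :: "real^'d::finite \<Rightarrow> ((real^'d) \<times> (real^'d)) measure"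
    and mu :: "real^'d \<Rightarrow> real"
    and p :: "real^'d \<Rightarrow> real^'d \<Rightarrow> real^'d \<Rightarrow> real"
  assumes P_meas: "P \<in> borel \<rightarrow>\<^sub>M prob_algebra (borel \<Otimes>\<^sub>M borel)"
    and mu_meas[measurable]: "mu \<in> borel_measurable borel"
    and mu_nonneg: "\<And>x. mu x \<ge> 0"
    and mu_prob: "prob_space (density lborel (\<lambda>x. ennreal (mu x)))"
    and p_meas: "(\<lambda>(x, y, z). p x y z) \<in> borel_measurable borel"
    and p_nonneg: "\<And>x y z. p x y z \<ge> 0"
    and P_density: "\<And>x. P x = density (density lborel (\<lambda>x. ennreal (mu x)) \<Otimes>\<^sub>M density lborel (\<lambda>x. ennreal (mu x)))
                                 (\<lambda>(y, z). ennreal (p x y z))"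
begin

abbreviation "\<mu>M \<equiv> density lborel (\<lambda>x. ennreal (mu x))"

definition "q x y = (\<integral>\<^sup>+ z. ennreal (p x y z + p x z y) \<partial>\<mu>M) / 2"

lemma sets_muM[simp, measurable_cong]: "sets \<mu>M = sets borel" by simp
lemma space_muM[simp]: "space \<mu>M = UNIV" by simp

lemma sets_pair_muM[simp, measurable_cong]:
  "sets (\<mu>M \<Otimes>\<^sub>M \<mu>M) = sets (borel :: ((real^'d) \<times> (real^'d)) measure)"
  by (metis borel_prod sets_muM sets_pair_measure_cong)

lemma pair_sigma_finite_muM: "pair_sigma_finite \<mu>M \<mu>M"
proof -
  interpret prob_space \<mu>M by (rule mu_prob)
  show ?thesis by (simp add: pair_sigma_finite_def sigma_finite_measure_axioms)
qed

lemma sigma_finite_muM: "sigma_finite_measure \<mu>M"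
  using pair_sigma_finite_muM by (simp add: pair_sigma_finite_def)

lemma measurable_p_pair[measurable]: "(\<lambda>yz. p x (fst yz) (snd yz)) \<in> borel_measurable borel"
  by (rule borel_measurable_section3[OF p_meas])

lemma measurable_p_fst[measurable]: "p x y \<in> borel_measurable borel"
  using measurable_comp[OF measurable_Pair_borel[OF measurable_const measurable_ident] measurable_p_pair[of x]]
  by (simp add: o_def)

lemma measurable_p_snd[measurable]: "(\<lambda>z. p x z y) \<in> borel_measurable borel"
  using measurable_comp[OF measurable_Pair_borel[OF measurable_ident measurable_const] measurable_p_pair[of x]]
  by (simp add: o_def)

lemma space_P[simp]: "space (P x) = UNIV"
  by (simp add: P_density space_pair_measure)

lemma sets_P[simp, measurable_cong]: "sets (P x) = sets (borel :: ((real^'d) \<times> (real^'d)) measure)"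
  unfolding P_density sets_density sets_pair_muM ..

lemma prob_space_P: "prob_space (P x)"
  using measurable_space[OF P_meas, of x] by (simp add: space_prob_algebra)

lemma nn_integral_P:
  assumes [measurable]: "f \<in> borel_measurable borel"
  shows "(\<integral>\<^sup>+yz. f yz \<partial>P x) = (\<integral>\<^sup>+y. \<integral>\<^sup>+z. ennreal (p x y z) * f (y, z) \<partial>\<mu>M \<partial>\<mu>M)"
proof -
  have "(\<integral>\<^sup>+yz. f yz \<partial>P x) = (\<integral>\<^sup>+yz. ennreal (p x (fst yz) (snd yz)) * f yz \<partial>(\<mu>M \<Otimes>\<^sub>M \<mu>M))"
    unfolding P_density by (subst nn_integral_density) (auto simp: case_prod_beta)
  also have "\<dots> = (\<integral>\<^sup>+y. \<integral>\<^sup>+z. ennreal (p x y z) * f (y, z) \<partial>\<mu>M \<partial>\<mu>M)"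
    by (subst sigma_finite_measure.nn_integral_fst[OF sigma_finite_muM, symmetric]) simp_all
  finally show ?thesis .
qed

lemma measurable_nn_integral_p[measurable]:
  "(\<lambda>y. \<integral>\<^sup>+ z. ennreal (p x y z) \<partial>\<mu>M) \<in> borel_measurable borel"
  "(\<lambda>y. \<integral>\<^sup>+ z. ennreal (p x z y) \<partial>\<mu>M) \<in> borel_measurable borel"
proof -
  have "(\<lambda>(y, z). ennreal (p x y z)) \<in> borel_measurable (\<mu>M \<Otimes>\<^sub>M \<mu>M)"
    by (simp add: measurable_cong_sets[OF sets_pair_muM refl] case_prod_beta)
  from sigma_finite_measure.borel_measurable_nn_integral[OF sigma_finite_muM this]
  show "(\<lambda>y. \<integral>\<^sup>+ z. ennreal (p x y z) \<partial>\<mu>M) \<in> borel_measurable borel" by simp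
  have "(\<lambda>(y, z). ennreal (p x z y)) \<in> borel_measurable (\<mu>M \<Otimes>\<^sub>M \<mu>M)"
    using measurable_pair_swap[OF \<open>(\<lambda>(y, z). ennreal (p x y z)) \<in> _\<close>] by (simp add: case_prod_beta)
  from sigma_finite_measure.borel_measurable_nn_integral[OF sigma_finite_muM this]
  show "(\<lambda>y. \<integral>\<^sup>+ z. ennreal (p x z y) \<partial>\<mu>M) \<in> borel_measurable borel" by simp
qed

lemma nn_integral_p_sum:
  "(\<integral>\<^sup>+ z. ennreal (p x y z + p x z y) \<partial>\<mu>M) = (\<integral>\<^sup>+ z. ennreal (p x y z) \<partial>\<mu>M) + (\<integral>\<^sup>+ z. ennreal (p x z y) \<partial>\<mu>M)"
  by (subst nn_integral_add[symmetric]) (auto simp: p_nonneg intro!: nn_integral_cong)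

lemma measurable_q[measurable]: "q x \<in> borel_measurable borel"
  unfolding q_def[abs_def] nn_integral_p_sum by simp

lemma nn_integral_fst_plus_snd:
  assumes [measurable]: "f \<in> borel_measurable borel"
  shows "(\<integral>\<^sup>+yz. f (fst yz) \<partial>P x) + (\<integral>\<^sup>+yz. f (snd yz) \<partial>P x)
       = (\<integral>\<^sup>+y. (\<integral>\<^sup>+ z. ennreal (p x y z + p x z y) \<partial>\<mu>M) * f y \<partial>\<mu>M)"
proof -
  have fst: "(\<integral>\<^sup>+yz. f (fst yz) \<partial>P x) = (\<integral>\<^sup>+y. (\<integral>\<^sup>+ z. ennreal (p x y z) \<partial>\<mu>M) * f y \<partial>\<mu>M)"
    by (subst nn_integral_P) (auto intro!: nn_integral_cong simp: nn_integral_multc)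
  have "(\<integral>\<^sup>+yz. f (snd yz) \<partial>P x) = (\<integral>\<^sup>+y. \<integral>\<^sup>+z. ennreal (p x y z) * f z \<partial>\<mu>M \<partial>\<mu>M)"
    by (subst nn_integral_P) auto
  also have "\<dots> = (\<integral>\<^sup>+z. \<integral>\<^sup>+y. ennreal (p x y z) * f z \<partial>\<mu>M \<partial>\<mu>M)"
    by (rule pair_sigma_finite.Fubini[OF pair_sigma_finite_muM, of "\<lambda>(y,z). ennreal (p x y z) * f z",
          simplified, symmetric])
  also have "\<dots> = (\<integral>\<^sup>+y. (\<integral>\<^sup>+ z. ennreal (p x z y) \<partial>\<mu>M) * f y \<partial>\<mu>M)"
    by (auto intro!: nn_integral_cong simp: nn_integral_multc)
  finally have snd: "(\<integral>\<^sup>+yz. f (snd yz) \<partial>P x) = \<dots>" .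
  show ?thesis unfolding fst snd nn_integral_p_sum
    by (subst nn_integral_add[symmetric]) (auto simp: distrib_right)
qed

lemma emeasure_P0: "A \<in> sets borel \<Longrightarrow> emeasure (P0 P x) A = emeasure (P x) (A \<times> UNIV)"
  by (simp add: P0_def emeasure_distr vimage_fst)

lemma emeasure_P1: "A \<in> sets borel \<Longrightarrow> emeasure (P1 P x) A = emeasure (P x) (UNIV \<times> A)"
  by (simp add: P1_def emeasure_distr vimage_snd)

lemma emeasure_density_q:
  assumes A[measurable]: "A \<in> sets borel"
  shows "emeasure (density \<mu>M (q x)) A = (emeasure (P0 P x) A + emeasure (P1 P x) A) / 2"
proof -
  have "A \<times> UNIV \<in> sets (P x)" "UNIV \<times> A \<in> sets (P x)" by (simp_all add: borel_prod[symmetric])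
  then have "emeasure (P0 P x) A + emeasure (P1 P x) A
      = (\<integral>\<^sup>+yz. indicator A (fst yz) \<partial>P x) + (\<integral>\<^sup>+yz. indicator A (snd yz) \<partial>P x)"
    by (simp add: emeasure_P0 emeasure_P1 flip: nn_integral_indicator)
       (simp add: indicator_def case_prod_beta mem_Times_iff)
  also have "\<dots> = (\<integral>\<^sup>+y. (\<integral>\<^sup>+ z. ennreal (p x y z + p x z y) \<partial>\<mu>M) * indicator A y \<partial>\<mu>M)"
    by (simp add: nn_integral_fst_plus_snd)
  also have "\<dots> / 2 = (\<integral>\<^sup>+y. q x y * indicator A y \<partial>\<mu>M)"
    unfolding q_def
    by (subst nn_integral_divide[symmetric])
       (auto intro!: nn_integral_cong simp: ennreal_times_divide mult.commute nn_integral_p_sum)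
  also have "\<dots> = emeasure (density \<mu>M (q x)) A"
    by (subst emeasure_density) (auto simp: mult.commute)
  finally show ?thesis ..
qed

lemma Qk_eq_density: "Qk P x = density \<mu>M (q x)"
proof -
  have "Qk P x = measure_of UNIV (sets borel) (emeasure (density \<mu>M (q x)))"
    unfolding Qk_def
  proof (rule measure_of_eq)
    fix A assume "A \<in> sigma_sets UNIV (sets (borel :: (real^'d) measure))"
    then have "A \<in> sets borel" by (metis sets.sigma_sets_eq space_borel)
    then show "(emeasure (P0 P x) A + emeasure (P1 P x) A) / 2 = emeasure (density \<mu>M (q x)) A"
      by (simp add: emeasure_density_q)
  qed simp
  also have "\<dots> = density \<mu>M (q x)"
    using measure_of_of_measure[of "density \<mu>M (q x)"] by simp
  finally show ?thesis .
qed

lemma sets_Qk[simp, measurable_cong]: "sets (Qk P x) = sets borel"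
  by (simp add: Qk_eq_density)

lemma space_Qk[simp]: "space (Qk P x) = UNIV"
  by (simp add: Qk_eq_density)

lemma emeasure_Qk: "A \<in> sets borel \<Longrightarrow> emeasure (Qk P x) A = (emeasure (P0 P x) A + emeasure (P1 P x) A) / 2"
  by (simp add: Qk_eq_density emeasure_density_q)

lemma prob_space_Qk: "prob_space (Qk P x)"
proof
  interpret prob_space "P x" by (rule prob_space_P)
  have "emeasure (P x) (UNIV \<times> UNIV) = 1" using emeasure_space_1 by (simp add: space_pair_measure)
  then show "emeasure (Qk P x) (space (Qk P x)) = 1"
    by (simp add: emeasure_Qk emeasure_P0 emeasure_P1 ennreal_divide_self)
qed

lemma measurable_Qk[measurable]: "Qk P \<in> borel \<rightarrow>\<^sub>M subprob_algebra borel"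
proof (rule measurable_subprob_algebra)
  show "subprob_space (Qk P x)" for x
    using prob_space_Qk[of x] by (simp add: prob_space_imp_subprob_space)
  fix A :: "(real^'d) set" assume A[measurable]: "A \<in> sets borel"
  have [measurable]: "P \<in> borel \<rightarrow>\<^sub>M subprob_algebra (borel \<Otimes>\<^sub>M borel)"
    by (rule measurable_prob_algebraD[OF P_meas])
  have "(\<lambda>x. (emeasure (P x) (A \<times> UNIV) + emeasure (P x) (UNIV \<times> A)) / 2) \<in> borel_measurable borel"
    by measurable
  then show "(\<lambda>x. emeasure (Qk P x) A) \<in> borel_measurable borel"
    by (simp add: emeasure_Qk emeasure_P0 emeasure_P1)
qed simp

lemma sets_Qn[simp, measurable_cong]: "sets (Qn P n x) = sets borel"
  by (cases n) (simp_all add: sets.sigma_sets_eq[of borel, simplified])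

lemma space_Qn[simp]: "space (Qn P n x) = UNIV"
  using sets_Qn[of n x] sets_eq_imp_space_eq by fastforce

lemma measurable_Qn_iff[simp]: "f \<in> measurable (Qn P n x) N \<longleftrightarrow> f \<in> measurable borel N"
  by (simp add: measurable_cong_sets[OF sets_Qn refl])

lemma Qn_Suc: "Qn P (Suc n) x = Qn P n x \<bind> Qk P"
  unfolding Qn.simps by (rule measure_of_nn_integral_emeasure_eq_bind) simp_all

lemma prob_space_Qn: "prob_space (Qn P n x)"
proof (induction n)
  case 0 then show ?case by (simp add: prob_space_return)
next
  case (Suc n)
  have km: "Qk P \<in> Qn P n x \<rightarrow>\<^sub>M subprob_algebra borel" by simp
  show ?case
    unfolding Qn_Suc by (rule prob_space.prob_space_bind[OF Suc _ km]) (simp add: prob_space_Qk)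
qed

lemma measurable_Qn[measurable]: "Qn P n \<in> borel \<rightarrow>\<^sub>M subprob_algebra borel"
proof (induction n)
  case 0 show ?case by (simp add: return_measurable)
next
  case (Suc n)
  have "(\<lambda>x. Qn P n x \<bind> Qk P) \<in> borel \<rightarrow>\<^sub>M subprob_algebra borel"
    by (rule measurable_bind2[OF Suc measurable_Qk])
  then show ?case by (simp add: Qn_Suc[abs_def])
qed

definition "Qf f y = (\<integral>z. f z \<partial>Qk P y)"

lemma bounded_measurable_Qf: "bounded_measurable f B \<Longrightarrow> bounded_measurable (Qf f) B"
  unfolding bounded_measurable_def Qf_def
  by (auto intro!: measurable_compose[OF measurable_Qk integral_measurable_subprob_algebra]
      prob_space_abs_integral_le[OF prob_space_Qk])

lemma Qpow_0: "f \<in> borel_measurable borel \<Longrightarrow> Qpow P 0 f x = f x"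
  unfolding Qpow_def by (simp add: integral_return)

lemma Qpow_Suc:
  assumes "bounded_measurable f B"
  shows "Qpow P (Suc n) f x = Qpow P n (Qf f) x"
proof -
  have [measurable]: "f \<in> borel_measurable borel" using bounded_measurableD(1)[OF assms] .
  have "Qpow P (Suc n) f x = (\<integral>y. f y \<partial>(Qn P n x \<bind> Qk P))"
    unfolding Qpow_def Qn_Suc ..
  also have "\<dots> = (\<integral>y. (\<integral>z. f z \<partial>Qk P y) \<partial>Qn P n x)"
    by (rule integral_bind[where B=B and B'=1 and K=borel and N="Qk P"])
       (auto simp: bounded_measurableD(2)[OF assms] prob_space_Qn prob_space_imp_subprob_space
             intro: prob_space.finite_measure
             intro!: AE_I2 prob_space.emeasure_space_1[OF prob_space_Qk, THEN eq_refl, simplified])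
  finally show ?thesis unfolding Qpow_def Qf_def .
qed

lemma bounded_measurable_Qpow: "bounded_measurable f B \<Longrightarrow> bounded_measurable (Qpow P n f) B"
proof (induction n arbitrary: f)
  case 0
  moreover have "Qpow P 0 f = f" by (simp add: fun_eq_iff Qpow_0 bounded_measurableD(1)[OF 0])
  ultimately show ?case by simp
next
  case (Suc n)
  have "Qpow P (Suc n) f = Qpow P n (Qf f)" using Qpow_Suc[OF Suc.prems] by (simp add: fun_eq_iff)
  with Suc.IH[OF bounded_measurable_Qf[OF Suc.prems]] show ?case by simp
qed

lemma Qpow_1: "bounded_measurable f B \<Longrightarrow> Qpow P 1 f x = Qf f x"
  using Qpow_Suc[of f B 0 x] Qpow_0[OF bounded_measurableD(1)[OF bounded_measurable_Qf]] by simp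

lemma Qpow_add: "bounded_measurable f B \<Longrightarrow> Qpow P (a + b) f x = Qpow P a (Qpow P b f) x"
proof (induction b arbitrary: f x)
  case 0
  then have "Qpow P 0 f = f" by (simp add: fun_eq_iff Qpow_0 bounded_measurableD(1))
  then show ?case by simp
next
  case (Suc b)
  have "Qpow P (a + Suc b) f x = Qpow P (a + b) (Qf f) x" by (simp add: Qpow_Suc[OF Suc.prems])
  also have "\<dots> = Qpow P a (Qpow P b (Qf f)) x" by (rule Suc.IH[OF bounded_measurable_Qf[OF Suc.prems]])
  also have "Qpow P b (Qf f) = Qpow P (Suc b) f" using Qpow_Suc[OF Suc.prems] by (simp add: fun_eq_iff)
  finally show ?case .
qed

lemma Qpow_Suc_left: "bounded_measurable f B \<Longrightarrow> Qpow P (Suc n) f x = Qf (Qpow P n f) x"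
  using Qpow_add[of f B 1 n x] Qpow_1[OF bounded_measurable_Qpow] by simp

lemma integrable_Qn: "bounded_measurable f B \<Longrightarrow> integrable (Qn P n x) f"
  by (rule prob_space_integrable_bounded[OF prob_space_Qn _ bounded_measurableD(2)])
     (simp add: bounded_measurableD(1))

lemma Qpow_affine:
  assumes "bounded_measurable f B"
  shows "Qpow P n (\<lambda>y. c * f y + d) x = c * Qpow P n f x + d"
proof -
  interpret prob_space "Qn P n x" by (rule prob_space_Qn)
  show ?thesis unfolding Qpow_def using integrable_Qn[OF assms] prob_space by simp
qed

lemma Qpow_mono:
  "bounded_measurable f B \<Longrightarrow> bounded_measurable g B' \<Longrightarrow> (\<And>y. f y \<le> g y) \<Longrightarrow>
    Qpow P n f x \<le> Qpow P n g x"
  unfolding Qpow_def by (rule integral_mono[OF integrable_Qn integrable_Qn])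

lemma Qpow_square_le: "bounded_measurable f B \<Longrightarrow> (Qpow P n f x)\<^sup>2 \<le> Qpow P n (\<lambda>y. (f y)\<^sup>2) x"
  unfolding Qpow_def
  by (rule prob_space_square_integral_le[OF prob_space_Qn _ bounded_measurableD(2)])
     (simp add: bounded_measurableD(1))

lemma Qpow_nonneg: "bounded_measurable f B \<Longrightarrow> (\<And>y. 0 \<le> f y) \<Longrightarrow> 0 \<le> Qpow P n f x"
  unfolding Qpow_def by (rule Bochner_Integration.integral_nonneg) simp

lemma Qf_affine: "bounded_measurable f B \<Longrightarrow> Qf (\<lambda>y. c * f y + d) x = c * Qf f x + d"
  using Qpow_affine[of f B 1 c d x] Qpow_1 bounded_measurable_affine by metis

lemma Qf_mono:
  "bounded_measurable f B \<Longrightarrow> bounded_measurable g B' \<Longrightarrow> (\<And>y. f y \<le> g y) \<Longrightarrow> Qf f x \<le> Qf g x"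
  using Qpow_mono[of f B g B' 1 x] Qpow_1 by metis

lemma abs_Qf_le_L1:
  assumes q_mu: "\<And>z y. q z y * ennreal (mu y) \<le> ennreal C" and C: "0 \<le> C"
    and [measurable]: "g \<in> borel_measurable borel" and g: "integrable lborel g"
  shows "\<bar>Qf g z\<bar> \<le> C * (\<integral>y. \<bar>g y\<bar> \<partial>lborel)"
proof -
  have "(\<integral>\<^sup>+y. ennreal (norm (g y)) \<partial>Qk P z) = (\<integral>\<^sup>+y. ennreal (mu y) * (q z y * ennreal \<bar>g y\<bar>) \<partial>lborel)"
    by (simp add: Qk_eq_density nn_integral_density)
  also have "\<dots> \<le> (\<integral>\<^sup>+y. ennreal C * ennreal \<bar>g y\<bar> \<partial>lborel)"
  proof (rule nn_integral_mono)
    fix y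
    have "ennreal (mu y) * (q z y * ennreal \<bar>g y\<bar>) = (q z y * ennreal (mu y)) * ennreal \<bar>g y\<bar>"
      by (simp add: ac_simps)
    also have "\<dots> \<le> ennreal C * ennreal \<bar>g y\<bar>" by (rule mult_right_mono[OF q_mu]) simp
    finally show "ennreal (mu y) * (q z y * ennreal \<bar>g y\<bar>) \<le> ennreal C * ennreal \<bar>g y\<bar>" .
  qed
  also have "\<dots> = ennreal (C * (\<integral>y. \<bar>g y\<bar> \<partial>lborel))"
    using g C by (simp add: nn_integral_cmult nn_integral_eq_integral ennreal_mult)
  finally have le: "(\<integral>\<^sup>+y. ennreal (norm (g y)) \<partial>Qk P z) \<le> ennreal (C * (\<integral>y. \<bar>g y\<bar> \<partial>lborel))" .
  show ?thesis
  proof (cases "integrable (Qk P z) g")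
    case True
    have "ennreal \<bar>Qf g z\<bar> \<le> (\<integral>\<^sup>+y. ennreal (norm (g y)) \<partial>Qk P z)"
      unfolding Qf_def using integral_norm_bound_ennreal[OF True] by simp
    with le have "ennreal \<bar>Qf g z\<bar> \<le> ennreal (C * (\<integral>y. \<bar>g y\<bar> \<partial>lborel))" by (meson order.trans)
    then show ?thesis using C by (simp add: ennreal_le_iff)
  next
    case False
    then show ?thesis unfolding Qf_def using C by (simp add: not_integrable_integral_eq)
  qed
qed

lemma measurable_Pop:
  assumes g[measurable]: "(\<lambda>(x, y, z). g x y z) \<in> borel_measurable borel"
  shows "Pop P g \<in> borel_measurable borel"
proof -
  have "case_prod Pair \<in> (borel :: (real^'d) measure) \<Otimes>\<^sub>M (borel \<Otimes>\<^sub>M borel :: ((real^'d) \<times> (real^'d)) measure)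
      \<rightarrow>\<^sub>M borel"
    unfolding borel_prod by simp
  \<comment> \<open>\<open>Pop P g x\<close> integrates \<open>g\<close> against the image of \<open>P x\<close> under \<open>yz \<mapsto> (x, yz)\<close>.\<close>
  from measurable_distr2[OF this measurable_prob_algebraD[OF P_meas]]
  have D: "(\<lambda>x. distr (P x) borel (Pair x)) \<in> borel \<rightarrow>\<^sub>M subprob_algebra borel" .
  have "Pop P g = (\<lambda>x. \<integral>t. (\<lambda>(x, y, z). g x y z) t \<partial>distr (P x) borel (Pair x))"
    unfolding Pop_def by (subst integral_distr) (auto simp: case_prod_beta)
  with measurable_compose[OF D integral_measurable_subprob_algebra[OF g]] show ?thesis by simp
qed

lemma integrable_P:
  fixes h :: "(real^'d) \<times> (real^'d) \<Rightarrow> real"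
  shows "h \<in> borel_measurable borel \<Longrightarrow> (\<And>yz. \<bar>h yz\<bar> \<le> B) \<Longrightarrow> integrable (P x) h"
  by (rule prob_space_integrable_bounded[OF prob_space_P]) simp_all

lemma integral_fst_plus_snd:
  assumes f: "bounded_measurable f B"
  shows "(\<integral>yz. f (fst yz) \<partial>P x) + (\<integral>yz. f (snd yz) \<partial>P x) = 2 * Qf f x"
proof -
  interpret Px: prob_space "P x" by (rule prob_space_P)
  interpret Qx: prob_space "Qk P x" by (rule prob_space_Qk)
  have [measurable]: "f \<in> borel_measurable borel" using bounded_measurableD(1)[OF f] .
  have fb: "\<bar>f y\<bar> \<le> B" for y using bounded_measurableD(2)[OF f] .
  \<comment> \<open>Shift \<open>f\<close> to a nonnegative function, to which the \<open>\<integral>\<^sup>+\<close> identity applies.\<close>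
  define g where "g y = f y + B" for y
  have g0: "0 \<le> g y" for y using fb[of y] unfolding g_def by linarith
  have gb: "\<bar>g y\<bar> \<le> 2 * B" for y using fb[of y] unfolding g_def by linarith
  have [measurable]: "g \<in> borel_measurable borel" unfolding g_def by simp
  have i: "integrable (P x) (\<lambda>yz. g (fst yz))" "integrable (P x) (\<lambda>yz. g (snd yz))"
    by (auto intro!: integrable_P gb)
  have iQ: "integrable (Qk P x) g"
    by (rule prob_space_integrable_bounded[OF prob_space_Qk _ gb]) simp
  have "ennreal (\<integral>yz. g (fst yz) \<partial>P x) + ennreal (\<integral>yz. g (snd yz) \<partial>P x)
      = (\<integral>\<^sup>+y. (\<integral>\<^sup>+ z. ennreal (p x y z + p x z y) \<partial>\<mu>M) * ennreal (g y) \<partial>\<mu>M)"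
    using i g0 by (simp add: nn_integral_eq_integral flip: nn_integral_fst_plus_snd)
  also have "\<dots> = (\<integral>\<^sup>+y. 2 * (q x y * ennreal (g y)) \<partial>\<mu>M)"
    unfolding q_def by (intro nn_integral_cong) (simp add: mult.assoc[symmetric] ennreal_two_times_half)
  also have "\<dots> = 2 * (\<integral>\<^sup>+y. ennreal (g y) \<partial>Qk P x)"
    by (subst nn_integral_cmult) (auto simp: Qk_eq_density nn_integral_density)
  also have "\<dots> = ennreal (2 * (\<integral>y. g y \<partial>Qk P x))"
    using iQ g0 by (simp add: nn_integral_eq_integral ennreal_mult)
  finally have "ennreal ((\<integral>yz. g (fst yz) \<partial>P x) + (\<integral>yz. g (snd yz) \<partial>P x)) = ennreal (2 * (\<integral>y. g y \<partial>Qk P x))"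
    using g0 by (simp add: ennreal_plus)
  then have "(\<integral>yz. g (fst yz) \<partial>P x) + (\<integral>yz. g (snd yz) \<partial>P x) = 2 * (\<integral>y. g y \<partial>Qk P x)"
    using g0 by (subst (asm) ennreal_inj) (auto intro!: add_nonneg_nonneg integral_nonneg)
  moreover have "integrable (P x) (\<lambda>yz. f (fst yz))" "integrable (P x) (\<lambda>yz. f (snd yz))"
    by (auto intro!: integrable_P fb)
  moreover have "integrable (Qk P x) f"
    by (rule prob_space_integrable_bounded[OF prob_space_Qk _ fb]) simp
  ultimately show ?thesis
    using Px.prob_space Qx.prob_space unfolding g_def Qf_def by simp
qed

lemma abs_Pop_le:
  assumes "(\<lambda>(x, y, z). g x y z) \<in> borel_measurable borel" "\<And>x y z. \<bar>g x y z\<bar> \<le> B"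
  shows "\<bar>Pop P g x\<bar> \<le> B"
  unfolding Pop_def
  using borel_measurable_section3[OF assms(1)]
  by (intro prob_space_abs_integral_le[OF prob_space_P]) (simp_all add: assms measurable_cong_sets[OF sets_P refl])

lemma Pop_one: "Pop P (\<lambda>_ _ _. 1) x = 1"
  using prob_space.prob_space[OF prob_space_P] unfolding Pop_def by simp

lemma Pop_children_sum:
  assumes "bounded_measurable f B"
  shows "Pop P (\<lambda>x y z. f y + f z) x = 2 * Qf f x"
  using integral_fst_plus_snd[OF assms, of x] bounded_measurableD[OF assms]
  unfolding Pop_def by (subst Bochner_Integration.integral_add) (auto intro!: integrable_P)

definition "increment f x y z = f y + f z - 2 * Qf f x"

lemma measurable_increment:
  assumes f: "bounded_measurable f B"
  shows "(\<lambda>(x, y, z). increment f x y z) \<in> borel_measurable borel"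
    and "(\<lambda>(x, y, z). (increment f x y z)\<^sup>2) \<in> borel_measurable borel"
proof -
  have [measurable]: "f \<in> borel_measurable borel" "Qf f \<in> borel_measurable borel"
    using bounded_measurableD(1)[OF f] bounded_measurableD(1)[OF bounded_measurable_Qf[OF f]] by auto
  show "(\<lambda>(x, y, z). increment f x y z) \<in> borel_measurable borel"
    unfolding increment_def by (rule borel_measurable_triple) measurable
  show "(\<lambda>(x, y, z). (increment f x y z)\<^sup>2) \<in> borel_measurable borel"
    unfolding increment_def by (rule borel_measurable_triple) measurable
qed

lemma abs_increment_le: "bounded_measurable f B \<Longrightarrow> \<bar>increment f x y z\<bar> \<le> 4 * B"
  using bounded_measurableD(2)[of f B y] bounded_measurableD(2)[of f B z]
    bounded_measurableD(2)[OF bounded_measurable_Qf, of f B x]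
  unfolding increment_def by linarith

lemma Pop_increment:
  assumes "bounded_measurable f B"
  shows "Pop P (increment f) x = 0"
proof -
  have "\<bar>f a + f b\<bar> \<le> 2 * B" for a b
    using bounded_measurableD(2)[OF assms, of a] bounded_measurableD(2)[OF assms, of b] by linarith
  then have "integrable (P x) (\<lambda>yz. f (fst yz) + f (snd yz))"
    using bounded_measurableD(1)[OF assms] by (intro integrable_P) auto
  interpret prob_space "P x" by (rule prob_space_P)
  show ?thesis
    using Pop_children_sum[OF assms, of x] prob_space \<open>integrable (P x) _\<close>
    unfolding Pop_def increment_def by simp
qed

lemma Pop_increment_square:
  assumes f: "bounded_measurable f B"
  shows "Pop P (\<lambda>x y z. (increment f x y z)\<^sup>2) x \<le> 4 * Qf (\<lambda>y. (f y)\<^sup>2) x"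
proof -
  interpret Px: prob_space "P x" by (rule prob_space_P)
  have [measurable]: "f \<in> borel_measurable borel" using bounded_measurableD(1)[OF f] .
  have fb: "\<bar>f y\<bar> \<le> B" and f2b: "(f y)\<^sup>2 \<le> B\<^sup>2" for y
    using bounded_measurableD(2)[OF f] square_le_of_abs_le by auto
  define S where "S yz = f (fst yz) + f (snd yz)" for yz
  have [measurable]: "S \<in> borel_measurable borel" unfolding S_def by simp
  have Sb: "\<bar>S yz\<bar> \<le> 2 * B" for yz
    unfolding S_def using fb[of "fst yz"] fb[of "snd yz"] by linarith
  have iS: "integrable (P x) S" "integrable (P x) (\<lambda>yz. (S yz)\<^sup>2)"
    using Sb square_le_of_abs_le[OF Sb] by (auto intro!: integrable_P)
  have i2: "integrable (P x) (\<lambda>yz. (f (fst yz))\<^sup>2)" "integrable (P x) (\<lambda>yz. (f (snd yz))\<^sup>2)"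
    by (auto intro!: integrable_P f2b)
  have "Pop P (\<lambda>x y z. (increment f x y z)\<^sup>2) x = Px.variance S"
    using Pop_children_sum[OF f, of x] unfolding Pop_def S_def increment_def by simp
  also have "\<dots> \<le> Px.expectation (\<lambda>yz. (S yz)\<^sup>2)"
    using Px.variance_eq[OF iS] by simp
  also have "\<dots> \<le> Px.expectation (\<lambda>yz. 2 * (f (fst yz))\<^sup>2 + 2 * (f (snd yz))\<^sup>2)"
    using iS i2 by (intro integral_mono) (auto simp: S_def square_sum_le)
  also have "\<dots> = 2 * (Px.expectation (\<lambda>yz. (f (fst yz))\<^sup>2) + Px.expectation (\<lambda>yz. (f (snd yz))\<^sup>2))"
    using i2 by simp
  also have "\<dots> = 4 * Qf (\<lambda>y. (f y)\<^sup>2) x"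
    using integral_fst_plus_snd[OF bounded_measurable_square[OF f], of x] by simp
  finally show ?thesis .
qed

end

locale invariant_density_kernel = density_kernel +
  assumes invariant: "Q_invariant_prob P \<mu>M"
begin

lemma bind_Qk_invariant: "\<mu>M \<bind> Qk P = \<mu>M"
proof (rule measure_eqI)
  have km: "Qk P \<in> \<mu>M \<rightarrow>\<^sub>M subprob_algebra borel" by simp
  show "sets (\<mu>M \<bind> Qk P) = sets \<mu>M" using sets_bind[OF sets_kernel[OF km]] by simp
  fix A assume "A \<in> sets (\<mu>M \<bind> Qk P)"
  then have A: "A \<in> sets borel" using sets_bind[OF sets_kernel[OF km]] by simp
  show "emeasure (\<mu>M \<bind> Qk P) A = emeasure \<mu>M A"
    using emeasure_bind[OF _ km A] invariant A unfolding Q_invariant_prob_def by simp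
qed

lemma integral_Qf_invariant:
  assumes f: "bounded_measurable f B"
  shows "(\<integral>x. Qf f x \<partial>\<mu>M) = (\<integral>x. f x \<partial>\<mu>M)"
proof -
  have [measurable]: "f \<in> borel_measurable borel" using bounded_measurableD(1)[OF f] .
  have "(\<integral>x. f x \<partial>\<mu>M) = (\<integral>x. f x \<partial>(\<mu>M \<bind> Qk P))" by (simp add: bind_Qk_invariant)
  also have "\<dots> = (\<integral>x. Qf f x \<partial>\<mu>M)" unfolding Qf_def
    by (rule integral_bind[where B=B and B'=1 and K=borel and N="Qk P"])
       (auto simp: bounded_measurableD(2)[OF f]
             intro: prob_space.finite_measure[OF mu_prob]
             intro!: AE_I2 prob_space.emeasure_space_1[OF prob_space_Qk, THEN eq_refl, simplified])
  finally show ?thesis ..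
qed

lemma integral_Qpow_invariant:
  "bounded_measurable f B \<Longrightarrow> (\<integral>x. Qpow P n f x \<partial>\<mu>M) = (\<integral>x. f x \<partial>\<mu>M)"
proof (induction n arbitrary: f)
  case 0 then show ?case by (simp add: Qpow_0 bounded_measurableD(1))
next
  case (Suc n)
  then show ?case
    by (simp add: Qpow_Suc[OF Suc.prems] Suc.IH[OF bounded_measurable_Qf] integral_Qf_invariant)
qed

end

section \<open>Second moments of generation sums\<close>

locale bmc_setting = invariant_density_kernel +
  fixes \<nu> and k0 :: nat and \<nu>0 and B\<nu> :: real and M and X
  assumes bmc: "bmc M X \<nu> P"
    and nu0_meas[measurable]: "\<nu>0 \<in> borel_measurable borel"
    and nu0_bound: "AE y in \<mu>M. \<bar>\<nu>0 y\<bar> \<le> B\<nu>"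
    and nu0_density: "mQn \<nu> P k0 = density \<mu>M (\<lambda>y. ennreal (\<nu>0 y))"
begin

lemma prob_space_M: "prob_space M"
  using bmc unfolding bmc_def by blast

lemma measurable_X[measurable]: "X u \<in> M \<rightarrow>\<^sub>M borel"
  using bmc unfolding bmc_def by blast

lemma nu_eq_distr: "\<nu> = distr M borel (X [])"
  using bmc unfolding bmc_def by simp

lemma prob_space_nu: "prob_space \<nu>"
  unfolding nu_eq_distr by (rule prob_space.prob_space_distr[OF prob_space_M measurable_X])

lemma sets_nu[simp, measurable_cong]: "sets \<nu> = sets borel"
  unfolding nu_eq_distr by simp

lemma integrable_nu:
  assumes "bounded_measurable g B"
  shows "integrable \<nu> g"
  using bounded_measurableD[OF assms] by (intro prob_space_integrable_bounded[OF prob_space_nu]) auto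

lemma mQn_eq_bind: "mQn \<nu> P k = \<nu> \<bind> Qn P k"
  unfolding mQn_def
  by (rule measure_of_nn_integral_emeasure_eq_bind) (simp_all add: prob_space.not_empty[OF prob_space_nu])

lemma integral_mQn:
  assumes f: "bounded_measurable f B"
  shows "(\<integral>x. f x \<partial>mQn \<nu> P k) = (\<integral>x. Qpow P k f x \<partial>\<nu>)"
proof -
  have [measurable]: "f \<in> borel_measurable borel" using bounded_measurableD(1)[OF f] .
  show ?thesis unfolding mQn_eq_bind Qpow_def
    by (rule integral_bind[where B=B and B'=1 and K=borel and N="Qn P k"])
       (auto simp: bounded_measurableD(2)[OF f]
             intro: prob_space.finite_measure[OF prob_space_nu]
             intro!: AE_I2 prob_space.emeasure_space_1[OF prob_space_Qn, THEN eq_refl, simplified])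
qed

lemma integral_Qpow_initial_le:
  assumes G: "bounded_measurable G B" and G0: "\<And>y. 0 \<le> G y" and l: "k0 \<le> l"
  shows "(\<integral>x. Qpow P l G x \<partial>\<nu>) \<le> B\<nu> * (\<integral>x. G x \<partial>\<mu>M)"
proof -
  define H where "H = Qpow P (l - k0) G"
  have H: "bounded_measurable H B" unfolding H_def by (rule bounded_measurable_Qpow[OF G])
  have [measurable]: "H \<in> borel_measurable borel" using bounded_measurableD(1)[OF H] .
  have H0: "0 \<le> H y" for y unfolding H_def by (rule Qpow_nonneg[OF G G0])
  have iH: "integrable \<mu>M H"
    using bounded_measurableD[OF H] by (intro prob_space_integrable_bounded[OF mu_prob]) auto
  have iH': "integrable \<mu>M (\<lambda>x. max 0 (\<nu>0 x) * H x)"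
  proof (rule finite_measure.integrable_const_bound[OF prob_space.finite_measure[OF mu_prob]])
    show "AE x in \<mu>M. norm (max 0 (\<nu>0 x) * H x) \<le> \<bar>B\<nu>\<bar> * B"
      using nu0_bound
      by eventually_elim (auto simp: abs_mult intro!: mult_mono' bounded_measurableD(2)[OF H])
  qed simp
  have "(\<integral>x. Qpow P l G x \<partial>\<nu>) = (\<integral>x. Qpow P k0 H x \<partial>\<nu>)"
    unfolding H_def using Qpow_add[OF G, of k0 "l - k0"] l by simp
  also have "\<dots> = (\<integral>x. H x \<partial>mQn \<nu> P k0)" by (rule integral_mQn[OF H, symmetric])
  also have "\<dots> = (\<integral>x. H x \<partial>density \<mu>M (\<lambda>y. ennreal (max 0 (\<nu>0 y))))"
    \<comment> \<open>\<^const>\<open>ennreal\<close> truncates at zero, so only the positive part of \<open>\<nu>0\<close> is a density.\<close>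
    by (simp add: nu0_density ennreal_max_0)
  also have "\<dots> = (\<integral>x. max 0 (\<nu>0 x) * H x \<partial>\<mu>M)"
    by (subst integral_density) simp_all
  also have "\<dots> \<le> (\<integral>x. B\<nu> * H x \<partial>\<mu>M)"
  proof (rule integral_mono_AE[OF iH'])
    show "integrable \<mu>M (\<lambda>x. B\<nu> * H x)" using iH by simp
    show "AE x in \<mu>M. max 0 (\<nu>0 x) * H x \<le> B\<nu> * H x"
      using nu0_bound by eventually_elim (auto intro!: mult_right_mono H0)
  qed
  also have "\<dots> = B\<nu> * (\<integral>x. G x \<partial>\<mu>M)"
    unfolding H_def by (simp add: integral_Qpow_invariant[OF G])
  finally show ?thesis .
qed

lemma integral_Qpow_nu_le_const:
  assumes g: "bounded_measurable g B" and le: "\<And>y. g y \<le> C"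
  shows "(\<integral>x. Qpow P j g x \<partial>\<nu>) \<le> C"
proof -
  interpret nu: prob_space \<nu> by (rule prob_space_nu)
  have "Qpow P j g x \<le> C" for x
    using Qpow_mono[OF g bounded_measurable_affine[OF g, of 0 C], of j x] le Qpow_affine[OF g, of j 0 C x] by simp
  then show ?thesis by (intro nu.integral_le_const integrable_nu[OF bounded_measurable_Qpow[OF g]]) simp
qed

lemma integrable_M: "F \<in> borel_measurable M \<Longrightarrow> bounded_real F \<Longrightarrow> integrable M F"
  unfolding bounded_real_def using prob_space_integrable_bounded[OF prob_space_M] by blast

lemma measurable_X_comp[measurable]:
  "bounded_measurable f B \<Longrightarrow> (\<lambda>\<omega>. f (X u \<omega>)) \<in> borel_measurable M"
  using measurable_comp[OF measurable_X bounded_measurableD(1)] by (simp add: o_def)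

lemma bounded_real_X_comp: "bounded_measurable f B \<Longrightarrow> bounded_real (\<lambda>\<omega>. f (X u \<omega>))"
  unfolding bounded_real_def bounded_measurable_def by blast

lemma subalgebra_tree_sigma: "subalgebra M (tree_sigma M X k)"
proof -
  let ?G = "{X j -` B \<inter> space M | j B. j \<in> Tree k \<and> B \<in> sets borel}"
  have G: "?G \<subseteq> Pow (space M)" by auto
  have "?G \<subseteq> sets M" by (auto intro: measurable_sets[OF measurable_X])
  from sets.sigma_sets_subset[OF this] show ?thesis unfolding subalgebra_def tree_sigma_def
    using space_measure_of_conv G by (auto simp: sets_measure_of[OF G])
qed

lemma measurable_X_tree_sigma[measurable]: "j \<in> Tree k \<Longrightarrow> X j \<in> tree_sigma M X k \<rightarrow>\<^sub>M borel"
proof (rule measurableI)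
  let ?G = "{X j -` B \<inter> space M | j B. j \<in> Tree k \<and> B \<in> sets borel}"
  have G: "?G \<subseteq> Pow (space M)" by auto
  fix A :: "(real^'a) set" assume "j \<in> Tree k" "A \<in> sets borel"
  then have "X j -` A \<inter> space M \<in> sets (tree_sigma M X k)"
    unfolding tree_sigma_def sets_measure_of[OF G] by (intro sigma_sets.Basic) blast
  moreover have "space (tree_sigma M X k) = space M" unfolding tree_sigma_def using G by simp
  ultimately show "X j -` A \<inter> space (tree_sigma M X k) \<in> sets (tree_sigma M X k)" by simp
qed simp

lemma measurable_X_comp_tree_sigma:
  "bounded_measurable f B \<Longrightarrow> u \<in> Tree k \<Longrightarrow> (\<lambda>\<omega>. f (X u \<omega>)) \<in> borel_measurable (tree_sigma M X k)"
  using measurable_comp[OF measurable_X_tree_sigma bounded_measurableD(1)] by (simp add: o_def)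

lemma measurable_X_triple[measurable]:
  assumes "(\<lambda>(x, y, z). G x y z) \<in> borel_measurable borel"
  shows "(\<lambda>\<omega>. G (X w \<omega>) (X w' \<omega>) (X w'' \<omega>)) \<in> borel_measurable M"
  using measurable_comp[OF _ assms, of "\<lambda>\<omega>. (X w \<omega>, X w' \<omega>, X w'' \<omega>)"] by (simp add: o_def)

lemma bmc_integral_prod:
  fixes g :: "bool list \<Rightarrow> _ \<Rightarrow> _ \<Rightarrow> _ \<Rightarrow> real"
  assumes g: "\<And>i. i \<in> Gen k \<Longrightarrow> (\<lambda>(x, y, z). g i x y z) \<in> borel_measurable borel"
    and gb: "\<And>i x y z. i \<in> Gen k \<Longrightarrow> \<bar>g i x y z\<bar> \<le> Bg"
    and Z: "Z \<in> borel_measurable (tree_sigma M X k)" and Zb: "\<And>\<omega>. \<bar>Z \<omega>\<bar> \<le> BZ"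
  shows "(\<integral>\<omega>. Z \<omega> * (\<Prod>i\<in>Gen k. g i (X i \<omega>) (X (i @ [False]) \<omega>) (X (i @ [True]) \<omega>)) \<partial>M)
       = (\<integral>\<omega>. Z \<omega> * (\<Prod>i\<in>Gen k. Pop P (g i) (X i \<omega>)) \<partial>M)"
proof -
  interpret prob_space M by (rule prob_space_M)
  interpret finite_measure_subalgebra M "tree_sigma M X k"
    by unfold_locales (rule subalgebra_tree_sigma)
  define Y where "Y \<omega> = (\<Prod>i\<in>Gen k. g i (X i \<omega>) (X (i @ [False]) \<omega>) (X (i @ [True]) \<omega>))" for \<omega>
  have [measurable]: "Y \<in> borel_measurable M"
    unfolding Y_def by (intro borel_measurable_prod measurable_X_triple g)
  have Yb: "\<bar>Y \<omega>\<bar> \<le> Bg ^ card (Gen k)" for \<omega>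
    unfolding Y_def abs_prod using prod_mono[of "Gen k" _ "\<lambda>_. Bg"] gb by (simp add: prod_constant)
  have [measurable]: "Z \<in> borel_measurable M" by (rule measurable_from_subalg[OF subalg Z])
  have "integrable M (\<lambda>\<omega>. Z \<omega> * Y \<omega>)"
    by (rule integrable_const_bound[where B="BZ * Bg ^ card (Gen k)"])
       (simp_all add: abs_mult mult_mono' Zb Yb)
  then have "(\<integral>\<omega>. Z \<omega> * Y \<omega> \<partial>M) = (\<integral>\<omega>. Z \<omega> * real_cond_exp M (tree_sigma M X k) Y \<omega> \<partial>M)"
    by (rule real_cond_exp_intg(2)[OF _ Z, symmetric]) simp
  also have "\<dots> = (\<integral>\<omega>. Z \<omega> * (\<Prod>i\<in>Gen k. Pop P (g i) (X i \<omega>)) \<partial>M)"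
  proof (rule integral_cong_AE)
    have "\<forall>i\<in>Gen k. (\<lambda>(x, y, z). g i x y z) \<in> borel_measurable borel \<and> (\<exists>B. \<forall>x y z. \<bar>g i x y z\<bar> \<le> B)"
      using g gb by blast
    then have "AE \<omega> in M. real_cond_exp M (tree_sigma M X k) Y \<omega> = (\<Prod>i\<in>Gen k. Pop P (g i) (X i \<omega>))"
      using bmc unfolding bmc_def Y_def by blast
    then show "AE \<omega> in M. Z \<omega> * real_cond_exp M (tree_sigma M X k) Y \<omega> = Z \<omega> * (\<Prod>i\<in>Gen k. Pop P (g i) (X i \<omega>))"
      by eventually_elim simp
    have "(\<lambda>\<omega>. Pop P (g i) (X i \<omega>)) \<in> borel_measurable M" if "i \<in> Gen k" for i
      using measurable_comp[OF measurable_X measurable_Pop[OF g[OF that]]] by (simp add: o_def)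
    then show "(\<lambda>\<omega>. Z \<omega> * (\<Prod>i\<in>Gen k. Pop P (g i) (X i \<omega>))) \<in> borel_measurable M"
      by measurable
  qed simp
  finally show ?thesis unfolding Y_def .
qed

lemma bmc_integral_single:
  assumes w: "w \<in> Gen k"
    and G: "(\<lambda>(x, y, z). G x y z) \<in> borel_measurable borel" and Gb: "\<And>x y z. \<bar>G x y z\<bar> \<le> BG"
    and Z: "Z \<in> borel_measurable (tree_sigma M X k)" and Zb: "\<And>\<omega>. \<bar>Z \<omega>\<bar> \<le> BZ"
  shows "(\<integral>\<omega>. Z \<omega> * G (X w \<omega>) (X (w @ [False]) \<omega>) (X (w @ [True]) \<omega>) \<partial>M)
       = (\<integral>\<omega>. Z \<omega> * Pop P G (X w \<omega>) \<partial>M)"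
proof -
  define g where "g i = (if i = w then G else (\<lambda>_ _ _. 1::real))" for i
  have gm: "(\<lambda>(x, y, z). g i x y z) \<in> borel_measurable borel" for i
    using G by (simp add: g_def)
  have gb: "\<bar>g i x y z\<bar> \<le> max BG 1" for i x y z
    using Gb[of x y z] by (auto simp: g_def)
  have "(\<Prod>i\<in>Gen k. g i (X i \<omega>) (X (i @ [False]) \<omega>) (X (i @ [True]) \<omega>))
      = G (X w \<omega>) (X (w @ [False]) \<omega>) (X (w @ [True]) \<omega>)"
    "(\<Prod>i\<in>Gen k. Pop P (g i) (X i \<omega>)) = Pop P G (X w \<omega>)" for \<omega>
    using w by (simp_all add: g_def Pop_one prod.delta if_distrib[of "\<lambda>h. h _ _ _"] if_distrib[of "\<lambda>h. Pop P h _"]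
        cong: if_cong)
  with bmc_integral_prod[of k g, OF gm gb Z Zb] show ?thesis by simp
qed

lemma bmc_integral_pair:
  assumes w: "w \<in> Gen k" and w': "w' \<in> Gen k" and ne: "w \<noteq> w'"
    and G: "(\<lambda>(x, y, z). G x y z) \<in> borel_measurable borel" and Gb: "\<And>x y z. \<bar>G x y z\<bar> \<le> BG"
    and H: "(\<lambda>(x, y, z). H x y z) \<in> borel_measurable borel" and Hb: "\<And>x y z. \<bar>H x y z\<bar> \<le> BH"
  shows "(\<integral>\<omega>. G (X w \<omega>) (X (w @ [False]) \<omega>) (X (w @ [True]) \<omega>) * H (X w' \<omega>) (X (w' @ [False]) \<omega>) (X (w' @ [True]) \<omega>) \<partial>M)
       = (\<integral>\<omega>. Pop P G (X w \<omega>) * Pop P H (X w' \<omega>) \<partial>M)"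
proof -
  define g where "g i = (if i = w then G else if i = w' then H else (\<lambda>_ _ _. 1::real))" for i
  have prod_two: "(\<Prod>i\<in>Gen k. F i) = F w * F w'"
    if "\<And>i. i \<in> Gen k \<Longrightarrow> i \<noteq> w \<Longrightarrow> i \<noteq> w' \<Longrightarrow> F i = 1" for F :: "bool list \<Rightarrow> real"
  proof -
    have "(\<Prod>i\<in>Gen k. F i) = (\<Prod>i\<in>Gen k - {w, w'}. F i) * (\<Prod>i\<in>{w, w'}. F i)"
      by (rule prod.subset_diff) (use w w' in auto)
    also have "(\<Prod>i\<in>Gen k - {w, w'}. F i) = 1" by (rule prod.neutral) (use that in auto)
    finally show ?thesis using ne by simp
  qed
  have gm: "(\<lambda>(x, y, z). g i x y z) \<in> borel_measurable borel" for i
    using G H by (simp add: g_def)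
  have gb: "\<bar>g i x y z\<bar> \<le> max (max BG BH) 1" for i x y z
    using Gb[of x y z] Hb[of x y z] by (auto simp: g_def)
  have one: "(\<lambda>_. 1::real) \<in> borel_measurable (tree_sigma M X k)" by simp
  have "(\<Prod>i\<in>Gen k. g i (X i \<omega>) (X (i @ [False]) \<omega>) (X (i @ [True]) \<omega>))
     = G (X w \<omega>) (X (w @ [False]) \<omega>) (X (w @ [True]) \<omega>) * H (X w' \<omega>) (X (w' @ [False]) \<omega>) (X (w' @ [True]) \<omega>)"
    "(\<Prod>i\<in>Gen k. Pop P (g i) (X i \<omega>)) = Pop P G (X w \<omega>) * Pop P H (X w' \<omega>)" for \<omega>
    by (subst prod_two; use ne in \<open>auto simp: g_def Pop_one\<close>)+
  with bmc_integral_prod[of k g, OF gm gb one, of 1] show ?thesis by simp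
qed

lemma integral_root_scaled_square:
  assumes \<phi>: "bounded_measurable \<phi> B"
  shows "(\<integral>\<omega>. (c * \<phi> (X [] \<omega>))\<^sup>2 \<partial>M) = c\<^sup>2 * (\<integral>x. (\<phi> x)\<^sup>2 \<partial>\<nu>)"
proof -
  have [measurable]: "\<phi> \<in> borel_measurable borel" using bounded_measurableD(1)[OF \<phi>] .
  have "(\<integral>\<omega>. (c * \<phi> (X [] \<omega>))\<^sup>2 \<partial>M) = (\<integral>x. (c * \<phi> x)\<^sup>2 \<partial>\<nu>)"
    unfolding nu_eq_distr by (rule integral_distr[symmetric]) simp_all
  then show ?thesis by (simp add: power_mult_distrib)
qed

lemma integral_sum_Gen:
  "bounded_measurable f B \<Longrightarrow> (\<integral>\<omega>. (\<Sum>u\<in>Gen k. f (X u \<omega>)) \<partial>M) = 2 ^ k * (\<integral>x. Qpow P k f x \<partial>\<nu>)"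
proof (induction k arbitrary: f B)
  case 0
  have [measurable]: "f \<in> borel_measurable borel" using bounded_measurableD(1)[OF 0] .
  have "(\<integral>\<omega>. f (X [] \<omega>) \<partial>M) = (\<integral>x. f x \<partial>\<nu>)"
    unfolding nu_eq_distr by (rule integral_distr[symmetric]) simp_all
  then show ?case by (simp add: Gen_0 Qpow_0)
next
  case (Suc k)
  note f = Suc.prems
  have [measurable]: "f \<in> borel_measurable borel" using bounded_measurableD(1)[OF f] .
  have children: "(\<integral>\<omega>. f (X (i @ [False]) \<omega>) + f (X (i @ [True]) \<omega>) \<partial>M) = (\<integral>\<omega>. 2 * Qf f (X i \<omega>) \<partial>M)"
    if i: "i \<in> Gen k" for i
  proof -
    have G: "(\<lambda>(x::real^'a, y, z). f y + f z) \<in> borel_measurable borel" by (rule borel_measurable_triple) measurable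
    have Gb: "\<bar>f y + f z\<bar> \<le> 2 * B" for y z
      using bounded_measurableD(2)[OF f, of y] bounded_measurableD(2)[OF f, of z] by linarith
    have one: "(\<lambda>_. 1::real) \<in> borel_measurable (tree_sigma M X k)" by simp
    show ?thesis
      using bmc_integral_single[OF i G Gb one, of 1] by (simp add: Pop_children_sum[OF f])
  qed
  have "(\<integral>\<omega>. (\<Sum>u\<in>Gen (Suc k). f (X u \<omega>)) \<partial>M) = (\<Sum>i\<in>Gen k. \<integral>\<omega>. f (X (i @ [False]) \<omega>) + f (X (i @ [True]) \<omega>) \<partial>M)"
    unfolding sum_Gen_Suc
    by (subst Bochner_Integration.integral_sum) (auto intro!: integrable_M bounded_real_add bounded_real_X_comp[OF f])
  also have "\<dots> = 2 * (\<integral>\<omega>. (\<Sum>i\<in>Gen k. Qf f (X i \<omega>)) \<partial>M)"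
    using bounded_measurable_Qf[OF f]
    by (subst Bochner_Integration.integral_sum)
       (auto simp: children sum_distrib_left intro!: integrable_M bounded_real_X_comp)
  also have "\<dots> = 2 ^ Suc k * (\<integral>x. Qpow P (Suc k) f x \<partial>\<nu>)"
    by (simp add: Suc.IH[OF bounded_measurable_Qf[OF f]] Qpow_Suc[OF f])
  finally show ?case .
qed

definition "node_increment \<Psi> i \<omega> = increment \<Psi> (X i \<omega>) (X (i @ [False]) \<omega>) (X (i @ [True]) \<omega>)"

lemma measurable_node_increment[measurable]:
  "bounded_measurable \<Psi> B \<Longrightarrow> node_increment \<Psi> i \<in> borel_measurable M"
  unfolding node_increment_def by (rule measurable_X_triple[OF measurable_increment(1)])

lemma bounded_real_node_increment: "bounded_measurable \<Psi> B \<Longrightarrow> bounded_real (node_increment \<Psi> i)"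
  unfolding node_increment_def bounded_real_def using abs_increment_le by blast

lemma integral_times_node_increment:
  assumes \<Psi>: "bounded_measurable \<Psi> B" and i: "i \<in> Gen l"
    and Z: "Z \<in> borel_measurable (tree_sigma M X l)" "\<And>\<omega>. \<bar>Z \<omega>\<bar> \<le> BZ"
  shows "(\<integral>\<omega>. Z \<omega> * node_increment \<Psi> i \<omega> \<partial>M) = 0"
  using bmc_integral_single[OF i measurable_increment(1)[OF \<Psi>] abs_increment_le[OF \<Psi>] Z]
  by (simp add: node_increment_def Pop_increment[OF \<Psi>])

lemma integral_node_increment_product:
  assumes \<Psi>: "bounded_measurable \<Psi> B" and i: "i \<in> Gen l" and j: "j \<in> Gen l"
  shows "(\<integral>\<omega>. node_increment \<Psi> i \<omega> * node_increment \<Psi> j \<omega> \<partial>M)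
       = (if i = j then \<integral>\<omega>. Pop P (\<lambda>x y z. (increment \<Psi> x y z)\<^sup>2) (X i \<omega>) \<partial>M else 0)"
proof (cases "i = j")
  case True
  note inc = measurable_increment[OF \<Psi>]
  have "\<bar>(increment \<Psi> x y z)\<^sup>2\<bar> \<le> (4 * B)\<^sup>2" for x y z
    using square_le_of_abs_le[OF abs_increment_le[OF \<Psi>]] by simp
  moreover have "(\<lambda>_. 1::real) \<in> borel_measurable (tree_sigma M X l)" by simp
  ultimately show ?thesis
    using bmc_integral_single[OF i inc(2), of "(4 * B)\<^sup>2" "\<lambda>_. 1" 1] True
    by (simp add: node_increment_def power2_eq_square)
next
  case False
  note inc = measurable_increment(1)[OF \<Psi>] abs_increment_le[OF \<Psi>]
  from bmc_integral_pair[OF i j False inc inc] False show ?thesis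
    by (simp add: node_increment_def Pop_increment[OF \<Psi>])
qed

lemma integral_sum_node_increment_square_le:
  assumes \<Psi>: "bounded_measurable \<Psi> B"
  shows "(\<integral>\<omega>. (\<Sum>i\<in>Gen l. node_increment \<Psi> i \<omega>)\<^sup>2 \<partial>M)
         \<le> 2 ^ (l + 2) * (\<integral>x. Qpow P (Suc l) (\<lambda>y. (\<Psi> y)\<^sup>2) x \<partial>\<nu>)"
proof -
  define V where "V = Pop P (\<lambda>x y z. (increment \<Psi> x y z)\<^sup>2)"
  note inc2 = measurable_increment(2)[OF \<Psi>]
  note Ib = bounded_real_node_increment[OF \<Psi>]
  have "\<bar>(increment \<Psi> x y z)\<^sup>2\<bar> \<le> (4 * B)\<^sup>2" for x y z
    using square_le_of_abs_le[OF abs_increment_le[OF \<Psi>]] by simp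
  then have V: "bounded_measurable V ((4 * B)\<^sup>2)"
    unfolding bounded_measurable_def V_def using measurable_Pop[OF inc2] abs_Pop_le[OF inc2] by blast
  have \<Psi>2: "bounded_measurable (Qf (\<lambda>y. (\<Psi> y)\<^sup>2)) (B\<^sup>2)"
    by (rule bounded_measurable_Qf[OF bounded_measurable_square[OF \<Psi>]])
  have "(\<integral>\<omega>. (\<Sum>i\<in>Gen l. node_increment \<Psi> i \<omega>)\<^sup>2 \<partial>M)
      = (\<Sum>i\<in>Gen l. \<Sum>j\<in>Gen l. \<integral>\<omega>. node_increment \<Psi> i \<omega> * node_increment \<Psi> j \<omega> \<partial>M)"
    unfolding power2_eq_square sum_product using \<Psi>
    by (subst Bochner_Integration.integral_sum, auto intro!: integrable_M bounded_real_sum bounded_real_mult Ib,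
        subst Bochner_Integration.integral_sum, auto intro!: integrable_M bounded_real_mult Ib)
  also have "\<dots> = (\<Sum>i\<in>Gen l. \<integral>\<omega>. V (X i \<omega>) \<partial>M)"
    by (simp add: integral_node_increment_product[OF \<Psi>] V_def sum.delta cong: sum.cong)
  also have "\<dots> \<le> (\<Sum>i\<in>Gen l. \<integral>\<omega>. 4 * Qf (\<lambda>y. (\<Psi> y)\<^sup>2) (X i \<omega>) \<partial>M)"
    using V \<Psi>2 unfolding V_def
    by (intro sum_mono integral_mono Pop_increment_square[OF \<Psi>])
       (auto intro!: integrable_M bounded_real_mult bounded_real_X_comp)
  also have "\<dots> = 4 * (2 ^ l * (\<integral>x. Qpow P l (Qf (\<lambda>y. (\<Psi> y)\<^sup>2)) x \<partial>\<nu>))"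
    using \<Psi>2 by (simp add: sum_distrib_left integral_sum_Gen[OF \<Psi>2, symmetric]
        Bochner_Integration.integral_sum integrable_M bounded_real_X_comp)
  also have "\<dots> = 2 ^ (l + 2) * (\<integral>x. Qpow P (Suc l) (\<lambda>y. (\<Psi> y)\<^sup>2) x \<partial>\<nu>)"
    by (simp add: Qpow_Suc[OF bounded_measurable_square[OF \<Psi>]])
  finally show ?thesis .
qed

lemma second_moment_step:
  assumes \<Psi>: "bounded_measurable \<Psi> B"
  shows "(\<integral>\<omega>. (\<Sum>u\<in>Gen (Suc l). \<Psi> (X u \<omega>))\<^sup>2 \<partial>M)
       \<le> (\<integral>\<omega>. (\<Sum>w\<in>Gen l. 2 * Qf \<Psi> (X w \<omega>))\<^sup>2 \<partial>M) + 2 ^ (l + 2) * (\<integral>x. Qpow P (Suc l) (\<lambda>y. (\<Psi> y)\<^sup>2) x \<partial>\<nu>)"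
proof -
  define Y where "Y \<omega> = (\<Sum>w\<in>Gen l. 2 * Qf \<Psi> (X w \<omega>))" for \<omega>
  define D where "D \<omega> = (\<Sum>i\<in>Gen l. node_increment \<Psi> i \<omega>)" for \<omega>
  note Q\<Psi> = bounded_measurable_Qf[OF \<Psi>]
  note Ib = bounded_real_node_increment[OF \<Psi>]
  have split: "(\<Sum>u\<in>Gen (Suc l). \<Psi> (X u \<omega>)) = Y \<omega> + D \<omega>" for \<omega>
    unfolding Y_def D_def node_increment_def increment_def sum_Gen_Suc
    by (simp add: sum.distrib[symmetric] sum_subtractf[symmetric])
  have [measurable]: "Y \<in> borel_measurable M" "D \<in> borel_measurable M"
    unfolding Y_def D_def using \<Psi> Q\<Psi> by auto
  have Yb: "bounded_real Y"
    unfolding Y_def by (intro bounded_real_sum bounded_real_mult bounded_real_const bounded_real_X_comp[OF Q\<Psi>])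
  have Db: "bounded_real D"
    unfolding D_def by (intro bounded_real_sum Ib)
  have Y_tree: "Y \<in> borel_measurable (tree_sigma M X l)"
    unfolding Y_def
    by (intro borel_measurable_sum borel_measurable_times borel_measurable_const
        measurable_X_comp_tree_sigma[OF Q\<Psi>] subsetD[OF Gen_subset_Tree])
  obtain CY where CY: "\<And>\<omega>. \<bar>Y \<omega>\<bar> \<le> CY" using Yb unfolding bounded_real_def by blast
  \<comment> \<open>Y is measurable at generation l, where the increments have conditional mean zero.\<close>
  have "(\<integral>\<omega>. Y \<omega> * D \<omega> \<partial>M) = (\<Sum>i\<in>Gen l. \<integral>\<omega>. Y \<omega> * node_increment \<Psi> i \<omega> \<partial>M)"
    unfolding D_def sum_distrib_left using \<Psi>
    by (intro Bochner_Integration.integral_sum) (auto intro!: integrable_M bounded_real_mult Yb Ib)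
  also have "\<dots> = 0"
    by (simp add: integral_times_node_increment[OF \<Psi> _ Y_tree CY])
  finally have cross: "(\<integral>\<omega>. Y \<omega> * D \<omega> \<partial>M) = 0" .
  have "(\<integral>\<omega>. (Y \<omega> + D \<omega>)\<^sup>2 \<partial>M) = (\<integral>\<omega>. (Y \<omega>)\<^sup>2 + 2 * (Y \<omega> * D \<omega>) + (D \<omega>)\<^sup>2 \<partial>M)"
    by (simp add: power2_sum ac_simps)
  also have "\<dots> = (\<integral>\<omega>. (Y \<omega>)\<^sup>2 \<partial>M) + 2 * (\<integral>\<omega>. Y \<omega> * D \<omega> \<partial>M) + (\<integral>\<omega>. (D \<omega>)\<^sup>2 \<partial>M)"
    using Yb Db
    by (subst Bochner_Integration.integral_add, auto intro!: integrable_M bounded_real_add bounded_real_mult bounded_real_power2,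
        subst Bochner_Integration.integral_add, auto intro!: integrable_M bounded_real_mult bounded_real_power2)
  also have "\<dots> \<le> (\<integral>\<omega>. (Y \<omega>)\<^sup>2 \<partial>M) + 2 ^ (l + 2) * (\<integral>x. Qpow P (Suc l) (\<lambda>y. (\<Psi> y)\<^sup>2) x \<partial>\<nu>)"
    using cross integral_sum_node_increment_square_le[OF \<Psi>, of l] unfolding D_def by simp
  finally show ?thesis unfolding split Y_def .
qed

text \<open>For \<open>l = k\<close> the left-hand side is the generation-\<open>k\<close> sum; each induction step on \<open>l\<close> splits
  off one generation of increments.\<close>
lemma second_moment_projected_sum_le:
  assumes \<phi>: "bounded_measurable \<phi> B" and "l \<le> k"
  shows "(\<integral>\<omega>. (\<Sum>w\<in>Gen l. 2 ^ (k - l) * Qpow P (k - l) \<phi> (X w \<omega>))\<^sup>2 \<partial>M)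
     \<le> (\<Sum>j\<le>l. 2 ^ (j + 1) * 4 ^ (k - j) * (\<integral>x. Qpow P j (\<lambda>y. (Qpow P (k - j) \<phi> y)\<^sup>2) x \<partial>\<nu>))"
proof -
  define Y where "Y l \<omega> = (\<Sum>w\<in>Gen l. 2 ^ (k - l) * Qpow P (k - l) \<phi> (X w \<omega>))" for l \<omega>
  define V where "V l = (\<Sum>j\<le>l. 2 ^ (j + 1) * 4 ^ (k - j) * (\<integral>x. Qpow P j (\<lambda>y. (Qpow P (k - j) \<phi> y)\<^sup>2) x \<partial>\<nu>))" for l
  have scaled_square: "(2 ^ m * Qpow P m \<phi> y)\<^sup>2 = 4 ^ m * (Qpow P m \<phi> y)\<^sup>2" for m y
    by (simp add: power_mult_distrib four_power_eq power2_eq_square)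
  from \<open>l \<le> k\<close> have "(\<integral>\<omega>. (Y l \<omega>)\<^sup>2 \<partial>M) \<le> V l"
  proof (induction l)
    case 0
    have "(\<integral>\<omega>. (Y 0 \<omega>)\<^sup>2 \<partial>M) = 4 ^ k * (\<integral>x. (Qpow P k \<phi> x)\<^sup>2 \<partial>\<nu>)"
      using integral_root_scaled_square[OF bounded_measurable_Qpow[OF \<phi>], of "2 ^ k" k]
      by (simp add: Y_def Gen_0 four_power_eq power2_eq_square)
    also have "\<dots> \<le> V 0"
      using Qpow_0[OF bounded_measurableD(1)[OF bounded_measurable_square[OF bounded_measurable_Qpow[OF \<phi>]]]]
      by (simp add: V_def Bochner_Integration.integral_nonneg)
    finally show ?case .
  next
    case (Suc l)
    define m where "m = k - Suc l"
    have km: "k - l = Suc m" using Suc.prems unfolding m_def by simp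
    define \<Psi> where "\<Psi> y = 2 ^ m * Qpow P m \<phi> y + 0" for y
    have \<Psi>: "bounded_measurable \<Psi> (\<bar>2 ^ m\<bar> * B + \<bar>0\<bar>)"
      unfolding \<Psi>_def by (intro bounded_measurable_affine bounded_measurable_Qpow[OF \<phi>])
    have "2 ^ (k - l) * Qpow P (k - l) \<phi> y = 2 * Qf \<Psi> y" for y
      using Qpow_Suc_left[OF \<phi>, of m y] Qf_affine[OF bounded_measurable_Qpow[OF \<phi>, of m], of "2 ^ m" 0 y]
      unfolding km \<Psi>_def by simp
    then have "Y l \<omega> = (\<Sum>w\<in>Gen l. 2 * Qf \<Psi> (X w \<omega>))" for \<omega>
      unfolding Y_def by simp
    moreover have "Y (Suc l) \<omega> = (\<Sum>u\<in>Gen (Suc l). \<Psi> (X u \<omega>))" for \<omega>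
      unfolding Y_def \<Psi>_def m_def by simp
    ultimately have "(\<integral>\<omega>. (Y (Suc l) \<omega>)\<^sup>2 \<partial>M)
        \<le> (\<integral>\<omega>. (Y l \<omega>)\<^sup>2 \<partial>M) + 2 ^ (l + 2) * (\<integral>x. Qpow P (Suc l) (\<lambda>y. (\<Psi> y)\<^sup>2) x \<partial>\<nu>)"
      using second_moment_step[OF \<Psi>, of l] by simp
    also have "(\<integral>x. Qpow P (Suc l) (\<lambda>y. (\<Psi> y)\<^sup>2) x \<partial>\<nu>) = 4 ^ m * (\<integral>x. Qpow P (Suc l) (\<lambda>y. (Qpow P m \<phi> y)\<^sup>2) x \<partial>\<nu>)"
      using Qpow_affine[OF bounded_measurable_square[OF bounded_measurable_Qpow[OF \<phi>, of m]], of "Suc l" "4 ^ m" 0]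
      by (simp add: \<Psi>_def scaled_square)
    also have "(\<integral>\<omega>. (Y l \<omega>)\<^sup>2 \<partial>M) \<le> V l" using Suc by simp
    finally show ?case unfolding V_def m_def by (simp add: mult.assoc)
  qed
  then show ?thesis unfolding Y_def V_def .
qed

lemma second_moment_sum_Gen_le:
  assumes \<phi>: "bounded_measurable \<phi> B"
  shows "(\<integral>\<omega>. (\<Sum>u\<in>Gen k. \<phi> (X u \<omega>))\<^sup>2 \<partial>M)
     \<le> (\<Sum>j\<le>k. 2 ^ (j + 1) * 4 ^ (k - j) * (\<integral>x. Qpow P j (\<lambda>y. (Qpow P (k - j) \<phi> y)\<^sup>2) x \<partial>\<nu>))"
  using second_moment_projected_sum_le[OF \<phi> order.refl, of k] bounded_measurableD(1)[OF \<phi>]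
  by (simp add: Qpow_0)

end

section \<open>Consistency of the kernel density estimator\<close>

locale kde_setting = bmc_setting +
  fixes K :: "(real, 'a) vec \<Rightarrow> real" and BK C0 Mc \<alpha> \<gamma> :: real and x0 :: "(real, 'a) vec"
  assumes K_meas[measurable]: "K \<in> borel_measurable borel"
    and K_bound: "\<And>y. \<bar>K y\<bar> \<le> BK"
    and K_int: "integrable lborel K"
    and K_one: "(\<integral>y. K y \<partial>lborel) = 1"
    and C0_bound: "\<And>x y. ennreal (mu x) + (\<integral>\<^sup>+ z. ennreal (p x y z + p x z y) \<partial>\<mu>M) / 2 * ennreal (mu y) \<le> ennreal C0"
    and C0_nonneg: "0 \<le> C0"
    and cont: "isCont mu x0"
    and geom: "\<And>f n. f \<in> borel_measurable borel \<Longrightarrow> (\<integral>\<^sup>+ x. ennreal ((f x)\<^sup>2) \<partial>\<mu>M) < \<infinity> \<Longrightarrow>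
        (\<integral>\<^sup>+ x. ennreal ((Qpow P n f x - (\<integral> y. f y \<partial>\<mu>M))\<^sup>2) \<partial>\<mu>M)
          \<le> ennreal ((Mc * \<alpha> ^ n)\<^sup>2) * (\<integral>\<^sup>+ x. ennreal ((f x)\<^sup>2) \<partial>\<mu>M)"
    and alpha: "0 < \<alpha>" "\<alpha> < 1"
    and gamma: "0 < \<gamma>" "\<gamma> < 1 / real CARD('a)"
begin

definition "bandwidth n = 2 powr (- real n * \<gamma>)"
text \<open>\<open>h^(-d/2)\<close> appears twice, as in \<^const>\<open>mu_hat\<close>: once in front of the sum and once inside \<^const>\<open>Kh\<close>.\<close>
definition "kernel_scale n = bandwidth n powr (- (real CARD('a) / 2)) * bandwidth n powr (- (real CARD('a) / 2))"
definition "kern n y = kernel_scale n * K ((1 / bandwidth n) *\<^sub>R (x0 - y))"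
definition "QF_bound = C0 * (\<integral>y. \<bar>K y\<bar> \<partial>lborel)"
definition "mean n = (\<integral>y. kern n y \<partial>\<mu>M)"
definition "centered n y = kern n y - mean n"

lemma bandwidth_pos: "bandwidth n > 0"
  unfolding bandwidth_def by simp

lemma kernel_scale_pos: "kernel_scale n > 0"
  unfolding kernel_scale_def using bandwidth_pos[of n] by simp

lemma kernel_scale_eq: "kernel_scale n = 2 powr (real n * \<gamma> * real CARD('a))"
proof -
  have "kernel_scale n = bandwidth n powr (- real CARD('a))" unfolding kernel_scale_def by (simp add: powr_add[symmetric])
  also have "\<dots> = 2 powr (real n * \<gamma> * real CARD('a))" unfolding bandwidth_def by (simp add: powr_powr)
  finally show ?thesis .
qed

lemma kernel_scale_times_bandwidth_power: "kernel_scale n * bandwidth n ^ CARD('a) = 1"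
  using bandwidth_pos[of n]
  by (simp add: kernel_scale_def powr_realpow[symmetric] powr_add[symmetric])

lemma BK_nonneg: "0 \<le> BK"
  using K_bound[of 0] by linarith

lemma mu_le_C0: "mu y \<le> C0"
  using order.trans[OF _ C0_bound[of y y]] C0_nonneg by (simp add: ennreal_le_iff[symmetric])

lemma q_mu_le_C0: "q z y * ennreal (mu y) \<le> ennreal C0"
  using order.trans[OF _ C0_bound[of z y]] by (simp add: q_def)

lemma measurable_kern[measurable]: "kern n \<in> borel_measurable borel"
  unfolding kern_def by measurable

lemma bounded_measurable_kern: "bounded_measurable (kern n) (kernel_scale n * BK)"
  unfolding bounded_measurable_def kern_def using kernel_scale_pos[of n] K_bound
  by (auto simp: abs_mult intro!: mult_left_mono)

lemma integrable_kern: "integrable lborel (kern n)"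
  unfolding kern_def using lborel_integral_rescale(2)[OF bandwidth_pos K_meas] K_int by simp

lemma integral_abs_kern: "(\<integral>y. \<bar>kern n y\<bar> \<partial>lborel) = (\<integral>y. \<bar>K y\<bar> \<partial>lborel)"
proof -
  have "(\<integral>y. \<bar>kern n y\<bar> \<partial>lborel) = kernel_scale n * (\<integral>y. \<bar>K ((1 / bandwidth n) *\<^sub>R (x0 - y))\<bar> \<partial>lborel)"
    unfolding kern_def using kernel_scale_pos[of n] by (simp add: abs_mult)
  also have "\<dots> = (\<integral>y. \<bar>K y\<bar> \<partial>lborel)"
    using kernel_scale_times_bandwidth_power[of n]
    by (subst lborel_integral_rescale(1)[OF bandwidth_pos]) (simp_all add: mult.assoc[symmetric])
  finally show ?thesis .
qed

lemma abs_Qf_kern_le: "\<bar>Qf (kern n) z\<bar> \<le> QF_bound"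
  using abs_Qf_le_L1[OF q_mu_le_C0 C0_nonneg measurable_kern integrable_kern]
  unfolding QF_bound_def integral_abs_kern .

lemma Qf_abs_kern_le: "Qf (\<lambda>y. \<bar>kern n y\<bar>) z \<le> QF_bound"
  using abs_Qf_le_L1[OF q_mu_le_C0 C0_nonneg, of "\<lambda>y. \<bar>kern n y\<bar>" z] integrable_kern[of n]
  unfolding QF_bound_def by (simp add: integral_abs_kern)

lemma bounded_measurable_Qf_kern: "bounded_measurable (Qf (kern n)) QF_bound"
  using bounded_measurable_Qf[OF bounded_measurable_kern] abs_Qf_kern_le
  unfolding bounded_measurable_def by blast

lemma mean_eq_integral_Qf: "mean n = (\<integral>y. Qf (kern n) y \<partial>\<mu>M)"
  unfolding mean_def by (rule integral_Qf_invariant[OF bounded_measurable_kern, symmetric])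

lemma abs_mean_le: "\<bar>mean n\<bar> \<le> QF_bound"
  unfolding mean_eq_integral_Qf using bounded_measurableD[OF bounded_measurable_Qf_kern]
  by (intro prob_space_abs_integral_le[OF mu_prob]) auto

lemma bounded_measurable_centered: "bounded_measurable (centered n) (kernel_scale n * BK + QF_bound)"
proof -
  have "bounded_measurable (centered n) (kernel_scale n * BK + \<bar>mean n\<bar>)"
    using bounded_measurable_affine[OF bounded_measurable_kern[of n], of 1 "- mean n"]
    by (simp add: centered_def[abs_def])
  then show ?thesis using abs_mean_le unfolding bounded_measurable_def by (meson add_left_mono order.trans)
qed

lemma mean_tendsto: "mean \<longlonglongrightarrow> mu x0"
proof -
  have "(\<lambda>n. (2 powr (- \<gamma>)) ^ n) \<longlonglongrightarrow> 0"
    by (rule LIMSEQ_power_zero) (use gamma(1) in \<open>simp add: powr_minus_divide\<close>)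
  moreover have "(2 powr (- \<gamma>)) ^ n = bandwidth n" for n
    unfolding bandwidth_def by (simp add: powr_realpow[symmetric] powr_powr mult.commute)
  ultimately have "bandwidth \<longlonglongrightarrow> 0" by simp
  moreover have "\<bar>mu y\<bar> \<le> C0" for y using mu_le_C0[of y] mu_nonneg[of y] by simp
  ultimately have "(\<lambda>n. \<integral>y. K ((1 / bandwidth n) *\<^sub>R (x0 - y)) * mu y / bandwidth n ^ CARD('a) \<partial>lborel) \<longlonglongrightarrow> mu x0"
    using kernel_smoothing_tendsto[where h=bandwidth and C=C0, OF K_meas mu_meas K_int _ cont bandwidth_pos] K_one
    by simp
  moreover have "mean = (\<lambda>n. \<integral>y. K ((1 / bandwidth n) *\<^sub>R (x0 - y)) * mu y / bandwidth n ^ CARD('a) \<partial>lborel)"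
  proof
    fix n
    have "kernel_scale n = 1 / bandwidth n ^ CARD('a)"
      using kernel_scale_times_bandwidth_power[of n] bandwidth_pos[of n] by (simp add: field_simps)
    then show "mean n = (\<integral>y. K ((1 / bandwidth n) *\<^sub>R (x0 - y)) * mu y / bandwidth n ^ CARD('a) \<partial>lborel)"
      unfolding mean_def kern_def
      by (subst integral_density) (auto simp: mu_nonneg intro!: Bochner_Integration.integral_cong)
  qed
  ultimately show ?thesis by simp
qed

definition "moment_term j r n = (\<integral>x. Qpow P j (\<lambda>y. (Qpow P r (centered n) y)\<^sup>2) x \<partial>\<nu>)"

lemma L2_geometric_ergodicity:
  assumes \<psi>: "bounded_measurable \<psi> B"
  shows "(\<integral>x. (Qpow P n \<psi> x - (\<integral>y. \<psi> y \<partial>\<mu>M))\<^sup>2 \<partial>\<mu>M) \<le> (Mc * \<alpha> ^ n)\<^sup>2 * (\<integral>x. (\<psi> x)\<^sup>2 \<partial>\<mu>M)"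
proof -
  have [measurable]: "\<psi> \<in> borel_measurable borel" using bounded_measurableD(1)[OF \<psi>] .
  have d: "bounded_measurable (\<lambda>x. (1 * Qpow P n \<psi> x + (- (\<integral>y. \<psi> y \<partial>\<mu>M)))\<^sup>2) ((\<bar>1\<bar> * B + \<bar>- (\<integral>y. \<psi> y \<partial>\<mu>M)\<bar>)\<^sup>2)"
    by (intro bounded_measurable_square bounded_measurable_affine bounded_measurable_Qpow[OF \<psi>])
  have i1: "integrable \<mu>M (\<lambda>x. (Qpow P n \<psi> x - (\<integral>y. \<psi> y \<partial>\<mu>M))\<^sup>2)"
    using bounded_measurableD[OF d] by (intro prob_space_integrable_bounded[OF mu_prob]) auto
  have i2: "integrable \<mu>M (\<lambda>x. (\<psi> x)\<^sup>2)"
    using bounded_measurableD[OF bounded_measurable_square[OF \<psi>]]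
    by (intro prob_space_integrable_bounded[OF mu_prob]) auto
  have e2: "(\<integral>\<^sup>+ x. ennreal ((\<psi> x)\<^sup>2) \<partial>\<mu>M) = ennreal (\<integral>x. (\<psi> x)\<^sup>2 \<partial>\<mu>M)"
    by (rule nn_integral_eq_integral[OF i2]) simp
  have "ennreal (\<integral>x. (Qpow P n \<psi> x - (\<integral>y. \<psi> y \<partial>\<mu>M))\<^sup>2 \<partial>\<mu>M)
      = (\<integral>\<^sup>+ x. ennreal ((Qpow P n \<psi> x - (\<integral> y. \<psi> y \<partial>\<mu>M))\<^sup>2) \<partial>\<mu>M)"
    by (rule nn_integral_eq_integral[OF i1, symmetric]) simp
  also have "\<dots> \<le> ennreal ((Mc * \<alpha> ^ n)\<^sup>2) * (\<integral>\<^sup>+ x. ennreal ((\<psi> x)\<^sup>2) \<partial>\<mu>M)"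
    by (rule geom) (simp_all add: e2)
  also have "\<dots> = ennreal ((Mc * \<alpha> ^ n)\<^sup>2 * (\<integral>x. (\<psi> x)\<^sup>2 \<partial>\<mu>M))"
    by (simp add: e2 ennreal_mult)
  finally show ?thesis
    by (subst (asm) ennreal_le_iff) (auto intro!: mult_nonneg_nonneg Bochner_Integration.integral_nonneg)
qed

lemma Qf_centered: "Qf (centered n) z = Qf (kern n) z - mean n"
  using Qf_affine[OF bounded_measurable_kern[of n], of 1 "- mean n" z] by (simp add: centered_def[abs_def])

lemma bounded_measurable_Qf_centered: "bounded_measurable (Qf (centered n)) (2 * QF_bound)"
proof -
  have "\<bar>Qf (centered n) z\<bar> \<le> 2 * QF_bound" for z
    using abs_Qf_kern_le[of n z] abs_mean_le[of n] unfolding Qf_centered by linarith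
  then show ?thesis using bounded_measurable_Qf[OF bounded_measurable_centered] unfolding bounded_measurable_def by blast
qed

lemma moment_term_le_QF_bound:
  assumes "1 \<le> r"
  shows "moment_term j r n \<le> (2 * QF_bound)\<^sup>2"
proof -
  have "Qpow P r (centered n) = Qpow P (r - 1) (Qf (centered n))"
    using Qpow_Suc[OF bounded_measurable_centered[of n], of "r - 1"] assms by (simp add: fun_eq_iff)
  then have b: "bounded_measurable (Qpow P r (centered n)) (2 * QF_bound)"
    using bounded_measurable_Qpow[OF bounded_measurable_Qf_centered] by simp
  show ?thesis unfolding moment_term_def
    by (rule integral_Qpow_nu_le_const[OF bounded_measurable_square[OF b]])
       (rule square_le_of_abs_le[OF bounded_measurableD(2)[OF b]])
qed

lemma integral_Qpow_centered_square_le: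
  assumes "1 \<le> s"
  shows "(\<integral>x. (Qpow P s (centered n) x)\<^sup>2 \<partial>\<mu>M) \<le> (Mc * \<alpha> ^ (s - 1))\<^sup>2 * QF_bound\<^sup>2"
proof -
  note QF = bounded_measurable_Qf_kern[of n]
  have "Qpow P s (centered n) x = Qpow P (s - 1) (Qf (kern n)) x - (\<integral>y. Qf (kern n) y \<partial>\<mu>M)" for x
  proof -
    have "Qpow P s (centered n) x = Qpow P (s - 1) (Qf (centered n)) x"
      using Qpow_Suc[OF bounded_measurable_centered[of n], of "s - 1" x] assms by simp
    also have "Qf (centered n) = (\<lambda>y. 1 * Qf (kern n) y + (- mean n))" by (simp add: fun_eq_iff Qf_centered)
    finally show ?thesis using Qpow_affine[OF QF, of "s - 1" 1 "- mean n" x] by (simp add: mean_eq_integral_Qf)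
  qed
  then have "(\<integral>x. (Qpow P s (centered n) x)\<^sup>2 \<partial>\<mu>M)
      = (\<integral>x. (Qpow P (s - 1) (Qf (kern n)) x - (\<integral>y. Qf (kern n) y \<partial>\<mu>M))\<^sup>2 \<partial>\<mu>M)"
    by simp
  also have "\<dots> \<le> (Mc * \<alpha> ^ (s - 1))\<^sup>2 * (\<integral>x. (Qf (kern n) x)\<^sup>2 \<partial>\<mu>M)"
    by (rule L2_geometric_ergodicity[OF QF])
  also have "\<dots> \<le> (Mc * \<alpha> ^ (s - 1))\<^sup>2 * QF_bound\<^sup>2"
  proof (rule mult_left_mono)
    interpret mp: prob_space \<mu>M by (rule mu_prob)
    note QF2 = bounded_measurable_square[OF QF]
    show "(\<integral>x. (Qf (kern n) x)\<^sup>2 \<partial>\<mu>M) \<le> QF_bound\<^sup>2"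
      using bounded_measurableD[OF QF2] square_le_of_abs_le[OF bounded_measurableD(2)[OF QF]]
      by (intro mp.integral_le_const prob_space_integrable_bounded[OF mu_prob, where B="QF_bound\<^sup>2"]) auto
  qed simp
  finally show ?thesis .
qed

lemma moment_term_le_mixing:
  assumes "k0 + 1 \<le> r"
  shows "moment_term j r n \<le> max B\<nu> 0 * ((Mc * \<alpha> ^ (r - k0 - 1))\<^sup>2 * QF_bound\<^sup>2)"
proof -
  define s where "s = r - k0"
  have rs: "r = k0 + s" "1 \<le> s" using assms unfolding s_def by auto
  note c = bounded_measurable_centered[of n]
  note s2 = bounded_measurable_square[OF bounded_measurable_Qpow[OF c, of s]]
  note r2 = bounded_measurable_square[OF bounded_measurable_Qpow[OF c, of r]]
  have "Qpow P j (\<lambda>y. (Qpow P r (centered n) y)\<^sup>2) x \<le> Qpow P (j + k0) (\<lambda>y. (Qpow P s (centered n) y)\<^sup>2) x" for x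
  proof -
    have "(Qpow P r (centered n) y)\<^sup>2 \<le> Qpow P k0 (\<lambda>y. (Qpow P s (centered n) y)\<^sup>2) y" for y
      using Qpow_square_le[OF bounded_measurable_Qpow[OF c], of k0 s y] by (simp add: rs(1) Qpow_add[OF c])
    then have "Qpow P j (\<lambda>y. (Qpow P r (centered n) y)\<^sup>2) x \<le> Qpow P j (Qpow P k0 (\<lambda>y. (Qpow P s (centered n) y)\<^sup>2)) x"
      by (rule Qpow_mono[OF r2 bounded_measurable_Qpow[OF s2]])
    then show ?thesis by (simp add: Qpow_add[OF s2])
  qed
  then have "moment_term j r n \<le> (\<integral>x. Qpow P (j + k0) (\<lambda>y. (Qpow P s (centered n) y)\<^sup>2) x \<partial>\<nu>)"
    unfolding moment_term_def
    by (intro integral_mono integrable_nu[OF bounded_measurable_Qpow[OF r2]] integrable_nu[OF bounded_measurable_Qpow[OF s2]])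
  also have "\<dots> \<le> B\<nu> * (\<integral>x. (Qpow P s (centered n) x)\<^sup>2 \<partial>\<mu>M)"
    by (rule integral_Qpow_initial_le[OF s2]) simp_all
  also have "\<dots> \<le> max B\<nu> 0 * (\<integral>x. (Qpow P s (centered n) x)\<^sup>2 \<partial>\<mu>M)"
    by (rule mult_right_mono) (auto intro: Bochner_Integration.integral_nonneg)
  also have "\<dots> \<le> max B\<nu> 0 * ((Mc * \<alpha> ^ (r - k0 - 1))\<^sup>2 * QF_bound\<^sup>2)"
    using integral_Qpow_centered_square_le[OF rs(2), of n] by (intro mult_left_mono) (simp_all add: s_def)
  finally show ?thesis .
qed

lemma Qf_centered_square_le:
  "Qf (\<lambda>y. (centered n y)\<^sup>2) z \<le> 2 * (kernel_scale n * BK) * QF_bound + 2 * QF_bound\<^sup>2"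
proof -
  have sBK: "0 \<le> kernel_scale n * BK" using kernel_scale_pos[of n] BK_nonneg by simp
  have kabs: "bounded_measurable (\<lambda>y. \<bar>kern n y\<bar>) (kernel_scale n * BK)"
    using bounded_measurable_kern[of n] unfolding bounded_measurable_def by auto
  have "(centered n y)\<^sup>2 \<le> (2 * (kernel_scale n * BK)) * \<bar>kern n y\<bar> + 2 * QF_bound\<^sup>2" for y
  proof -
    have "(centered n y)\<^sup>2 \<le> 2 * (kern n y)\<^sup>2 + 2 * (mean n)\<^sup>2"
      using square_sum_le[of "kern n y" "- mean n"] by (simp add: centered_def)
    moreover have "(kern n y)\<^sup>2 \<le> (kernel_scale n * BK) * \<bar>kern n y\<bar>"
      using mult_right_mono[OF bounded_measurableD(2)[OF bounded_measurable_kern], of "\<bar>kern n y\<bar>" n y]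
      by (simp add: power2_eq_square abs_mult_self_eq)
    moreover have "(mean n)\<^sup>2 \<le> QF_bound\<^sup>2" by (rule square_le_of_abs_le[OF abs_mean_le])
    ultimately show ?thesis by simp
  qed
  then have "Qf (\<lambda>y. (centered n y)\<^sup>2) z \<le> Qf (\<lambda>y. (2 * (kernel_scale n * BK)) * \<bar>kern n y\<bar> + 2 * QF_bound\<^sup>2) z"
    by (rule Qf_mono[OF bounded_measurable_square[OF bounded_measurable_centered] bounded_measurable_affine[OF kabs]])
  also have "\<dots> = (2 * (kernel_scale n * BK)) * Qf (\<lambda>y. \<bar>kern n y\<bar>) z + 2 * QF_bound\<^sup>2"
    by (rule Qf_affine[OF kabs])
  also have "\<dots> \<le> 2 * (kernel_scale n * BK) * QF_bound + 2 * QF_bound\<^sup>2"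
    using Qf_abs_kern_le[of n z] sBK by (simp add: mult_left_mono)
  finally show ?thesis .
qed

lemma moment_term_0_le:
  assumes "1 \<le> j"
  shows "moment_term j 0 n \<le> 2 * (kernel_scale n * BK) * QF_bound + 2 * QF_bound\<^sup>2"
proof -
  note c2 = bounded_measurable_square[OF bounded_measurable_centered[of n]]
  have "moment_term j 0 n = (\<integral>x. Qpow P (j - 1) (Qf (\<lambda>y. (centered n y)\<^sup>2)) x \<partial>\<nu>)"
    using Qpow_Suc[OF c2, of "j - 1"] assms bounded_measurableD(1)[OF bounded_measurable_centered[of n]]
    by (simp add: moment_term_def Qpow_0)
  also have "\<dots> \<le> 2 * (kernel_scale n * BK) * QF_bound + 2 * QF_bound\<^sup>2"
    by (rule integral_Qpow_nu_le_const[OF bounded_measurable_Qf[OF c2] Qf_centered_square_le])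
  finally show ?thesis .
qed

lemma moment_term_0_0_le: "moment_term 0 0 n \<le> (kernel_scale n * BK + QF_bound)\<^sup>2"
proof -
  note c = bounded_measurable_centered[of n]
  have eq: "Qpow P 0 (centered n) = centered n" by (simp add: fun_eq_iff Qpow_0 bounded_measurableD(1)[OF c])
  show ?thesis unfolding moment_term_def eq
    by (intro integral_Qpow_nu_le_const[OF bounded_measurable_square[OF c]] square_le_of_abs_le
        bounded_measurableD(2)[OF c])
qed

definition "mix_const = ((2 * QF_bound)\<^sup>2 + max B\<nu> 0 * Mc\<^sup>2 * QF_bound\<^sup>2) / (\<alpha>\<^sup>2) ^ (k0 + 1)"
definition "rate = max (1/2) (\<alpha>\<^sup>2)"
definition "diag_bound n = 2 * (kernel_scale n * BK) * QF_bound + 2 * QF_bound\<^sup>2"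

lemma alpha_square: "0 < \<alpha>\<^sup>2" "\<alpha>\<^sup>2 < 1"
  using alpha by (auto simp: power_less_one_iff)

lemma rate: "0 < rate" "rate < 1" "1/2 \<le> rate" "\<alpha>\<^sup>2 \<le> rate"
  unfolding rate_def using alpha_square by auto

lemma mix_const_nonneg: "0 \<le> mix_const"
  unfolding mix_const_def using alpha_square by (auto intro!: divide_nonneg_pos add_nonneg_nonneg mult_nonneg_nonneg)

lemma moment_term_le_geometric:
  assumes "1 \<le> r"
  shows "moment_term j r n \<le> mix_const * (\<alpha>\<^sup>2) ^ r"
proof -
  have mix: "mix_const * (\<alpha>\<^sup>2) ^ r = ((2 * QF_bound)\<^sup>2 + max B\<nu> 0 * Mc\<^sup>2 * QF_bound\<^sup>2) * ((\<alpha>\<^sup>2) ^ r / (\<alpha>\<^sup>2) ^ (k0 + 1))"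
    unfolding mix_const_def by simp
  show ?thesis
  proof (cases "r \<le> k0")
    case True
    have "(\<alpha>\<^sup>2) ^ (k0 + 1) \<le> (\<alpha>\<^sup>2) ^ r"
      using True alpha_square by (intro power_decreasing) auto
    then have ratio: "1 \<le> (\<alpha>\<^sup>2) ^ r / (\<alpha>\<^sup>2) ^ (k0 + 1)"
      using alpha_square by simp
    have "(2 * QF_bound)\<^sup>2 \<le> (2 * QF_bound)\<^sup>2 * ((\<alpha>\<^sup>2) ^ r / (\<alpha>\<^sup>2) ^ (k0 + 1))"
      using mult_left_mono[OF ratio, of "(2 * QF_bound)\<^sup>2"] by simp
    also have "\<dots> \<le> mix_const * (\<alpha>\<^sup>2) ^ r"
      unfolding mix using alpha_square by (intro mult_right_mono) auto
    finally show ?thesis using moment_term_le_QF_bound[OF assms, of j n] by linarith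
  next
    case False
    then have r: "k0 + 1 \<le> r" by simp
    have "(\<alpha> ^ (r - k0 - 1))\<^sup>2 = (\<alpha>\<^sup>2) ^ (r - (k0 + 1))"
      by (simp add: power_mult[symmetric] mult.commute)
    also have "\<dots> = (\<alpha>\<^sup>2) ^ r / (\<alpha>\<^sup>2) ^ (k0 + 1)"
      using r alpha_square by (simp add: power_diff)
    finally have "(\<alpha> ^ (r - k0 - 1))\<^sup>2 = (\<alpha>\<^sup>2) ^ r / (\<alpha>\<^sup>2) ^ (k0 + 1)" .
    then have "max B\<nu> 0 * ((Mc * \<alpha> ^ (r - k0 - 1))\<^sup>2 * QF_bound\<^sup>2)
        = (max B\<nu> 0 * Mc\<^sup>2 * QF_bound\<^sup>2) * ((\<alpha>\<^sup>2) ^ r / (\<alpha>\<^sup>2) ^ (k0 + 1))"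
      by (simp add: power_mult_distrib)
    also have "\<dots> \<le> mix_const * (\<alpha>\<^sup>2) ^ r"
      unfolding mix using alpha_square by (intro mult_right_mono) auto
    finally show ?thesis using moment_term_le_mixing[OF r, of j n] by linarith
  qed
qed

definition "gen_sum k n \<omega> = (\<Sum>u\<in>Gen k. centered n (X u \<omega>))"

lemma measurable_gen_sum[measurable]: "gen_sum k n \<in> borel_measurable M"
  unfolding gen_sum_def using measurable_X_comp[OF bounded_measurable_centered] by simp

lemma bounded_real_gen_sum: "bounded_real (gen_sum k n)"
  unfolding gen_sum_def by (intro bounded_real_sum bounded_real_X_comp[OF bounded_measurable_centered])

lemma power_rate_le:
  assumes "j \<le> k"
  shows "2 ^ j * 4 ^ (k - j) * (\<alpha>\<^sup>2) ^ (k - j) \<le> 4 ^ k * rate ^ k"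
proof -
  have "(4::real) ^ k = 4 ^ j * 4 ^ (k - j)" using assms by (simp flip: power_add)
  then have "2 ^ j * 4 ^ (k - j) * (\<alpha>\<^sup>2) ^ (k - j) = 4 ^ k * ((1/2) ^ j * (\<alpha>\<^sup>2) ^ (k - j))"
    by (simp add: four_power_eq power_one_over field_simps)
  also have "(1/2) ^ j * (\<alpha>\<^sup>2) ^ (k - j) \<le> rate ^ j * rate ^ (k - j)"
    by (intro mult_mono power_mono) (use rate alpha_square in auto)
  also have "rate ^ j * rate ^ (k - j) = rate ^ k" using assms by (simp flip: power_add)
  finally show ?thesis by simp
qed

lemma second_moment_gen_sum_le:
  assumes "1 \<le> k"
  shows "(\<integral>\<omega>. (gen_sum k n \<omega>)\<^sup>2 \<partial>M) \<le> 2 ^ (k + 1) * diag_bound n + 2 * mix_const * k * 4 ^ k * rate ^ k"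
proof -
  have "(\<integral>\<omega>. (gen_sum k n \<omega>)\<^sup>2 \<partial>M) \<le> (\<Sum>j\<le>k. 2 ^ (j + 1) * 4 ^ (k - j) * moment_term j (k - j) n)"
    unfolding gen_sum_def moment_term_def by (rule second_moment_sum_Gen_le[OF bounded_measurable_centered])
  also have "\<dots> = (\<Sum>j<k. 2 ^ (j + 1) * 4 ^ (k - j) * moment_term j (k - j) n) + 2 ^ (k + 1) * moment_term k 0 n"
    by (simp add: lessThan_Suc_atMost[symmetric])
  also have "\<dots> \<le> (\<Sum>j<k. 2 * mix_const * (4 ^ k * rate ^ k)) + 2 ^ (k + 1) * diag_bound n"
  proof (rule add_mono[OF sum_mono])
    fix j assume "j \<in> {..<k}"
    then have j: "j < k" by simp
    have "2 ^ (j + 1) * 4 ^ (k - j) * moment_term j (k - j) n \<le> 2 ^ (j + 1) * 4 ^ (k - j) * (mix_const * (\<alpha>\<^sup>2) ^ (k - j))"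
      using j by (intro mult_left_mono moment_term_le_geometric) auto
    also have "\<dots> = 2 * mix_const * (2 ^ j * 4 ^ (k - j) * (\<alpha>\<^sup>2) ^ (k - j))" by (simp add: ac_simps)
    also have "\<dots> \<le> 2 * mix_const * (4 ^ k * rate ^ k)"
      using j mix_const_nonneg by (intro mult_left_mono power_rate_le) auto
    finally show "2 ^ (j + 1) * 4 ^ (k - j) * moment_term j (k - j) n \<le> 2 * mix_const * (4 ^ k * rate ^ k)" .
  next
    show "2 ^ (k + 1) * moment_term k 0 n \<le> 2 ^ (k + 1) * diag_bound n"
      unfolding diag_bound_def by (intro mult_left_mono moment_term_0_le assms) simp
  qed
  also have "\<dots> = 2 ^ (k + 1) * diag_bound n + 2 * mix_const * k * 4 ^ k * rate ^ k"
    by simp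
  finally show ?thesis .
qed

lemma second_moment_gen_sum_0_le: "(\<integral>\<omega>. (gen_sum 0 n \<omega>)\<^sup>2 \<partial>M) \<le> 2 * (kernel_scale n * BK + QF_bound)\<^sup>2"
proof -
  have "(\<integral>\<omega>. (gen_sum 0 n \<omega>)\<^sup>2 \<partial>M) \<le> (\<Sum>j\<le>0. 2 ^ (j + 1) * 4 ^ (0 - j) * moment_term j (0 - j) n)"
    unfolding gen_sum_def moment_term_def by (rule second_moment_sum_Gen_le[OF bounded_measurable_centered])
  then show ?thesis using moment_term_0_0_le[of n] by simp
qed

lemma second_moment_average_Gen_le:
  assumes "1 \<le> n"
  shows "(\<integral>\<omega>. (gen_sum n n \<omega> / 2 ^ n)\<^sup>2 \<partial>M) \<le> 2 * diag_bound n / 2 ^ n + 2 * mix_const * n * rate ^ n"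
proof -
  have "(\<integral>\<omega>. (gen_sum n n \<omega> / 2 ^ n)\<^sup>2 \<partial>M) = (\<integral>\<omega>. (gen_sum n n \<omega>)\<^sup>2 \<partial>M) / (2 ^ n * 2 ^ n)"
    by (simp add: power_divide power2_eq_square)
  also have "\<dots> \<le> (2 ^ (n + 1) * diag_bound n + 2 * mix_const * n * (2 ^ n * 2 ^ n) * rate ^ n) / (2 ^ n * 2 ^ n)"
    using second_moment_gen_sum_le[OF assms, of n] by (intro divide_right_mono) (simp_all add: four_power_eq)
  also have "\<dots> = 2 * diag_bound n / 2 ^ n + 2 * mix_const * n * rate ^ n"
    by (simp add: field_simps)
  finally show ?thesis .
qed

lemma second_moment_gen_sum_over_power_le:
  assumes "1 \<le> k" "k \<le> n"
  shows "(\<integral>\<omega>. (gen_sum k n \<omega>)\<^sup>2 \<partial>M) / 2 ^ k \<le> 2 * diag_bound n + 2 * mix_const * n * (2 * rate) ^ n"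
proof -
  have "(\<integral>\<omega>. (gen_sum k n \<omega>)\<^sup>2 \<partial>M) / 2 ^ k \<le> (2 ^ (k + 1) * diag_bound n + 2 * mix_const * k * (2 ^ k * 2 ^ k) * rate ^ k) / 2 ^ k"
    using second_moment_gen_sum_le[OF assms(1), of n] by (intro divide_right_mono) (simp_all add: four_power_eq)
  also have "\<dots> = 2 * diag_bound n + 2 * mix_const * (k * (2 * rate) ^ k)"
    by (simp add: field_simps power_mult_distrib)
  also have "k * (2 * rate) ^ k \<le> n * (2 * rate) ^ n"
    using assms rate by (intro mult_mono power_increasing) auto
  finally show ?thesis using mix_const_nonneg by (simp add: mult_left_mono)
qed

definition "tree_sum n \<omega> = (\<Sum>k\<le>n. gen_sum k n \<omega>)"

lemma second_moment_tree_sum_le: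
  "(\<integral>\<omega>. (tree_sum n \<omega>)\<^sup>2 \<partial>M)
     \<le> 4 * (kernel_scale n * BK + QF_bound)\<^sup>2 + 2 ^ (n + 2) * (n * (2 * diag_bound n + 2 * mix_const * n * (2 * rate) ^ n))"
proof -
  have "{..n} = insert 0 {1..n}" by auto
  then have split: "tree_sum n \<omega> = gen_sum 0 n \<omega> + (\<Sum>k\<in>{1..n}. gen_sum k n \<omega>)" for \<omega>
    unfolding tree_sum_def by simp
  have pointwise: "(tree_sum n \<omega>)\<^sup>2 \<le> 2 * (gen_sum 0 n \<omega>)\<^sup>2 + 2 * (2 ^ (n + 1) * (\<Sum>k\<in>{1..n}. (gen_sum k n \<omega>)\<^sup>2 / 2 ^ k))" for \<omega>
    unfolding split using square_sum_le[of "gen_sum 0 n \<omega>" "\<Sum>k\<in>{1..n}. gen_sum k n \<omega>"]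
      square_sum_le_weighted[of "\<lambda>k. gen_sum k n \<omega>" n] by linarith
  have iS: "integrable M (\<lambda>\<omega>. (gen_sum k n \<omega>)\<^sup>2)" for k
    by (intro integrable_M bounded_real_power2 bounded_real_gen_sum) simp
  have "(\<integral>\<omega>. (tree_sum n \<omega>)\<^sup>2 \<partial>M)
      \<le> (\<integral>\<omega>. 2 * (gen_sum 0 n \<omega>)\<^sup>2 + 2 * (2 ^ (n + 1) * (\<Sum>k\<in>{1..n}. (gen_sum k n \<omega>)\<^sup>2 / 2 ^ k)) \<partial>M)"
    unfolding tree_sum_def using pointwise[unfolded tree_sum_def]
    by (intro integral_mono integrable_M)
       (simp_all add: bounded_real_power2 bounded_real_sum bounded_real_gen_sum bounded_real_add bounded_real_mult
          bounded_real_divide)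
  also have "\<dots> = 2 * (\<integral>\<omega>. (gen_sum 0 n \<omega>)\<^sup>2 \<partial>M) + 2 * (2 ^ (n + 1) * (\<Sum>k\<in>{1..n}. (\<integral>\<omega>. (gen_sum k n \<omega>)\<^sup>2 \<partial>M) / 2 ^ k))"
    using iS by (simp add: Bochner_Integration.integral_sum)
  also have "\<dots> \<le> 2 * (2 * (kernel_scale n * BK + QF_bound)\<^sup>2)
      + 2 * (2 ^ (n + 1) * (\<Sum>k\<in>{1..n}. 2 * diag_bound n + 2 * mix_const * n * (2 * rate) ^ n))"
    by (intro add_mono mult_left_mono sum_mono second_moment_gen_sum_0_le second_moment_gen_sum_over_power_le) auto
  also have "\<dots> = 4 * (kernel_scale n * BK + QF_bound)\<^sup>2 + 2 ^ (n + 2) * (n * (2 * diag_bound n + 2 * mix_const * n * (2 * rate) ^ n))"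
    by simp
  finally show ?thesis .
qed

lemma second_moment_average_Tree_le:
  "(\<integral>\<omega>. (tree_sum n \<omega> / (2 ^ (n + 1) - 1))\<^sup>2 \<partial>M)
     \<le> 4 * ((kernel_scale n * BK + QF_bound) / 2 ^ n)\<^sup>2 + 8 * real n * diag_bound n / 2 ^ n
       + 8 * mix_const * (real n)\<^sup>2 * rate ^ n"
proof -
  have card: "(2::real) ^ n \<le> 2 ^ (n + 1) - 1" "0 < (2::real) ^ n" "0 < (2::real) ^ (n + 1) - 1"
    using one_le_power[of "2::real" n] by (simp_all, linarith)
  have "(\<integral>\<omega>. (tree_sum n \<omega> / (2 ^ (n + 1) - 1))\<^sup>2 \<partial>M) = (\<integral>\<omega>. (tree_sum n \<omega>)\<^sup>2 \<partial>M) / (2 ^ (n + 1) - 1)\<^sup>2"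
    by (simp add: power_divide)
  also have "\<dots> \<le> (\<integral>\<omega>. (tree_sum n \<omega>)\<^sup>2 \<partial>M) / (2 ^ n)\<^sup>2"
    using card by (intro divide_left_mono power_mono Bochner_Integration.integral_nonneg mult_pos_pos) auto
  also have "\<dots> \<le> (4 * (kernel_scale n * BK + QF_bound)\<^sup>2
      + 2 ^ (n + 2) * (n * (2 * diag_bound n + 2 * mix_const * n * (2 * rate) ^ n))) / (2 ^ n)\<^sup>2"
    by (rule divide_right_mono[OF second_moment_tree_sum_le]) simp
  also have "\<dots> = 4 * ((kernel_scale n * BK + QF_bound) / 2 ^ n)\<^sup>2 + 8 * real n * diag_bound n / 2 ^ n
      + 8 * mix_const * (real n)\<^sup>2 * rate ^ n"
    by (simp add: field_simps power_mult_distrib power2_eq_square)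
  finally show ?thesis .
qed

lemma kernel_scale_over_power: "kernel_scale n / 2 ^ n = (2 powr (\<gamma> * real CARD('a) - 1)) ^ n"
proof -
  have "kernel_scale n / 2 ^ n = 2 powr (real n * \<gamma> * real CARD('a)) / 2 powr real n"
    by (simp add: kernel_scale_eq powr_realpow)
  also have "\<dots> = 2 powr (real n * (\<gamma> * real CARD('a) - 1))"
    by (simp add: powr_diff[symmetric] algebra_simps)
  also have "\<dots> = (2 powr (\<gamma> * real CARD('a) - 1)) ^ n"
    by (simp add: powr_realpow[symmetric] powr_powr mult.commute)
  finally show ?thesis .
qed

lemma kernel_scale_ratio: "0 \<le> 2 powr (\<gamma> * real CARD('a) - 1)" "2 powr (\<gamma> * real CARD('a) - 1) < 1"
proof -
  have "\<gamma> * real CARD('a) < 1" using gamma(2) by (simp add: field_simps)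
  then have "2 powr (\<gamma> * real CARD('a) - 1) < 2 powr 0" by (intro powr_less_mono) auto
  then show "2 powr (\<gamma> * real CARD('a) - 1) < 1" by simp
qed simp

lemma Gen_bound_tendsto_zero: "(\<lambda>n. 2 * diag_bound n / 2 ^ n + 2 * mix_const * n * rate ^ n) \<longlonglongrightarrow> 0"
proof -
  have "(\<lambda>n. 2 * diag_bound n / 2 ^ n + 2 * mix_const * n * rate ^ n)
      = (\<lambda>n. 4 * BK * QF_bound * (kernel_scale n / 2 ^ n) + 4 * QF_bound\<^sup>2 * (1 / 2) ^ n
          + 2 * mix_const * (real n * rate ^ n))"
    unfolding diag_bound_def by (simp add: fun_eq_iff field_simps power_one_over)
  moreover have "(\<lambda>n. 4 * BK * QF_bound * (kernel_scale n / 2 ^ n) + 4 * QF_bound\<^sup>2 * (1 / 2) ^ n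
      + 2 * mix_const * (real n * rate ^ n)) \<longlonglongrightarrow> 4 * BK * QF_bound * 0 + 4 * QF_bound\<^sup>2 * 0 + 2 * mix_const * 0"
    unfolding kernel_scale_over_power using kernel_scale_ratio rate
    by (intro tendsto_intros LIMSEQ_power_zero tendsto_n_times_power_zero) auto
  ultimately show ?thesis by simp
qed

lemma Tree_bound_tendsto_zero:
  "(\<lambda>n. 4 * ((kernel_scale n * BK + QF_bound) / 2 ^ n)\<^sup>2 + 8 * real n * diag_bound n / 2 ^ n
      + 8 * mix_const * (real n)\<^sup>2 * rate ^ n) \<longlonglongrightarrow> 0"
proof -
  have "(\<lambda>n. 4 * ((kernel_scale n * BK + QF_bound) / 2 ^ n)\<^sup>2 + 8 * real n * diag_bound n / 2 ^ n
        + 8 * mix_const * (real n)\<^sup>2 * rate ^ n)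
      = (\<lambda>n. 4 * (BK * (kernel_scale n / 2 ^ n) + QF_bound * (1 / 2) ^ n)\<^sup>2
        + 16 * BK * QF_bound * (real n * (kernel_scale n / 2 ^ n)) + 16 * QF_bound\<^sup>2 * (real n * (1 / 2) ^ n)
        + 8 * mix_const * ((real n)\<^sup>2 * rate ^ n))"
    unfolding diag_bound_def by (simp add: fun_eq_iff field_simps power_one_over)
  moreover have "(\<lambda>n. 4 * (BK * (kernel_scale n / 2 ^ n) + QF_bound * (1 / 2) ^ n)\<^sup>2
        + 16 * BK * QF_bound * (real n * (kernel_scale n / 2 ^ n)) + 16 * QF_bound\<^sup>2 * (real n * (1 / 2) ^ n)
        + 8 * mix_const * ((real n)\<^sup>2 * rate ^ n))
      \<longlonglongrightarrow> 4 * (BK * 0 + QF_bound * 0)\<^sup>2 + 16 * BK * QF_bound * 0 + 16 * QF_bound\<^sup>2 * 0 + 8 * mix_const * 0"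
    unfolding kernel_scale_over_power using kernel_scale_ratio rate
    by (intro tendsto_intros LIMSEQ_power_zero tendsto_n_times_power_zero tendsto_n_square_times_power_zero) auto
  ultimately show ?thesis by simp
qed

lemma mu_hat_eq_average: "mu_hat K bandwidth X A n x0 \<omega> = (1 / real (card A)) * (\<Sum>u\<in>A. kern n (X u \<omega>))"
  unfolding mu_hat_def Kh_def kern_def kernel_scale_def by (simp add: sum_distrib_left mult.assoc)

lemma average_minus_mu:
  assumes "finite A" "A \<noteq> {}"
  shows "(1 / real (card A)) * (\<Sum>u\<in>A. kern n (X u \<omega>)) - mu x0
       = (\<Sum>u\<in>A. centered n (X u \<omega>)) / real (card A) + (mean n - mu x0)"
proof -
  have "real (card A) > 0" using assms by (simp add: card_gt_0_iff)
  moreover have "(\<Sum>u\<in>A. kern n (X u \<omega>)) = (\<Sum>u\<in>A. centered n (X u \<omega>)) + real (card A) * mean n"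
    unfolding centered_def by (simp add: sum_subtractf)
  ultimately show ?thesis by (simp add: field_simps)
qed

lemma mu_hat_consistent_Gen:
  assumes "0 < \<epsilon>"
  shows "(\<lambda>n. measure M {\<omega> \<in> space M. \<bar>mu_hat K bandwidth X (Gen n) n x0 \<omega> - mu x0\<bar> > \<epsilon>}) \<longlonglongrightarrow> 0"
proof -
  have eq: "mu_hat K bandwidth X (Gen n) n x0 \<omega> - mu x0 = gen_sum n n \<omega> / 2 ^ n + (mean n - mu x0)" for n \<omega>
    using average_minus_mu[OF finite_Gen[of n] Gen_nonempty[of n], of n \<omega>]
    by (simp add: mu_hat_eq_average gen_sum_def card_Gen)
  have "(\<lambda>n. measure M {\<omega> \<in> space M. \<epsilon> < \<bar>gen_sum n n \<omega> / 2 ^ n + (mean n - mu x0)\<bar>}) \<longlonglongrightarrow> 0"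
  proof (rule prob_space.deviation_tendsto_zero[OF prob_space_M _ _ _ Gen_bound_tendsto_zero _ assms])
    show "integrable M (\<lambda>\<omega>. (gen_sum n n \<omega> / 2 ^ n)\<^sup>2)" for n
      by (intro integrable_M bounded_real_power2 bounded_real_divide bounded_real_gen_sum) simp
    show "eventually (\<lambda>n. (\<integral>\<omega>. (gen_sum n n \<omega> / 2 ^ n)\<^sup>2 \<partial>M) \<le> 2 * diag_bound n / 2 ^ n + 2 * mix_const * n * rate ^ n)
        sequentially"
      using eventually_ge_at_top[of 1] by eventually_elim (rule second_moment_average_Gen_le)
    show "(\<lambda>n. mean n - mu x0) \<longlonglongrightarrow> 0"
      using mean_tendsto by (simp add: LIM_zero)
  qed simp
  then show ?thesis unfolding eq .
qed

lemma mu_hat_consistent_Tree: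
  assumes "0 < \<epsilon>"
  shows "(\<lambda>n. measure M {\<omega> \<in> space M. \<bar>mu_hat K bandwidth X (Tree n) n x0 \<omega> - mu x0\<bar> > \<epsilon>}) \<longlonglongrightarrow> 0"
proof -
  have "real (card (Tree n)) = 2 ^ (n + 1) - 1" for n
    using one_le_power[of "2::nat" "Suc n"] by (simp add: card_Tree of_nat_diff)
  then have eq: "mu_hat K bandwidth X (Tree n) n x0 \<omega> - mu x0 = tree_sum n \<omega> / (2 ^ (n + 1) - 1) + (mean n - mu x0)"
    for n \<omega>
    using average_minus_mu[OF finite_Tree[of n] Tree_nonempty[of n], of n \<omega>]
    by (simp add: mu_hat_eq_average tree_sum_def gen_sum_def sum_Tree)
  have "(\<lambda>n. measure M {\<omega> \<in> space M. \<epsilon> < \<bar>tree_sum n \<omega> / (2 ^ (n + 1) - 1) + (mean n - mu x0)\<bar>}) \<longlonglongrightarrow> 0"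
  proof (rule prob_space.deviation_tendsto_zero[OF prob_space_M _ _ _ Tree_bound_tendsto_zero _ assms])
    show "(\<lambda>\<omega>. tree_sum n \<omega> / (2 ^ (n + 1) - 1)) \<in> borel_measurable M" for n
      unfolding tree_sum_def by simp
    show "integrable M (\<lambda>\<omega>. (tree_sum n \<omega> / (2 ^ (n + 1) - 1))\<^sup>2)" for n
      unfolding tree_sum_def
      by (intro integrable_M bounded_real_power2 bounded_real_divide bounded_real_sum bounded_real_gen_sum) simp
    show "(\<lambda>n. mean n - mu x0) \<longlonglongrightarrow> 0"
      using mean_tendsto by (simp add: LIM_zero)
    show "eventually (\<lambda>n. (\<integral>\<omega>. (tree_sum n \<omega> / (2 ^ (n + 1) - 1))\<^sup>2 \<partial>M)
        \<le> 4 * ((kernel_scale n * BK + QF_bound) / 2 ^ n)\<^sup>2 + 8 * real n * diag_bound n / 2 ^ n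
          + 8 * mix_const * (real n)\<^sup>2 * rate ^ n) sequentially"
      by (intro always_eventually allI second_moment_average_Tree_le)
  qed
  then show ?thesis unfolding eq .
qed

end

theorem lemma3p5:
  fixes M :: "'a measure"
    and X :: "bool list \<Rightarrow> 'a \<Rightarrow> real ^ 'd::finite"
    and \<nu> :: "(real ^ 'd) measure"
    and P :: "real ^ 'd \<Rightarrow> ((real ^ 'd) \<times> (real ^ 'd)) measure"
    and mu :: "real ^ 'd \<Rightarrow> real"
    and p :: "real ^ 'd \<Rightarrow> real ^ 'd \<Rightarrow> real ^ 'd \<Rightarrow> real"
    and K :: "real ^ 'd \<Rightarrow> real"
    and \<alpha> Mc \<gamma> s L :: real
    and k1 :: nat
  defines "\<mu>M \<equiv> density lborel (\<lambda>x. ennreal (mu x))"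
  defines "q \<equiv> (\<lambda>x y. (\<integral>\<^sup>+ z. ennreal (p x y z + p x z y) \<partial>\<mu>M) / 2)"
  defines "hsq \<equiv> (\<lambda>x. \<integral>\<^sup>+ y. (q x y) ^ 2 \<partial>\<mu>M)"
  defines "hfrak \<equiv> (\<lambda>x. sqrt (enn2real (hsq x)))"
  defines "h \<equiv> (\<lambda>n::nat. 2 powr (- real n * \<gamma>))"
  defines "d \<equiv> CARD('d)"
  assumes bmc: "bmc M X \<nu> P"
  \<comment> \<open>(A3) first part: mu is a Lebesgue density (of the measure muM)\<close>
    and mu_meas: "mu \<in> borel_measurable borel"
    and mu_nonneg: "\<And>x. mu x \<ge> 0"
  \<comment> \<open>(A1) geometric ergodicity\<close>
    and A1_inv: "Q_invariant_prob P \<mu>M"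
    and A1_unique: "\<And>m. Q_invariant_prob P m \<Longrightarrow> m = \<mu>M"
    and A1_alpha: "0 < \<alpha>" "\<alpha> < 1"
    and A1_geom: "\<And>f n. f \<in> borel_measurable borel \<Longrightarrow> (\<integral>\<^sup>+ x. ennreal ((f x)\<^sup>2) \<partial>\<mu>M) < \<infinity> \<Longrightarrow>
        (\<integral>\<^sup>+ x. ennreal ((Qpow P n f x - (\<integral> y. f y \<partial>\<mu>M))\<^sup>2) \<partial>\<mu>M)
          \<le> ennreal ((Mc * \<alpha> ^ n)\<^sup>2) * (\<integral>\<^sup>+ x. ennreal ((f x)\<^sup>2) \<partial>\<mu>M)"
  \<comment> \<open>(A2) regularity of P and nu\<close>
    and p_meas: "(\<lambda>(x, y, z). p x y z) \<in> borel_measurable borel"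
    and p_nonneg: "\<And>x y z. p x y z \<ge> 0"
    and A2_i: "\<And>x. P x = density (\<mu>M \<Otimes>\<^sub>M \<mu>M) (\<lambda>(y, z). ennreal (p x y z))"
    and A2_ii: "(\<integral>\<^sup>+ x. hsq x \<partial>\<mu>M) < \<infinity>"
    and A2_iii: "k1 \<ge> 1"
       "(\<integral>\<^sup>+ x. (\<integral>\<^sup>+ y. ennreal (hfrak y) \<partial>(Qn P (k1 - 1) x)) ^ 6 \<partial>\<mu>M) < \<infinity>"
    and A2_iv: "\<exists>(k0::nat) (\<nu>0 :: real ^ 'd \<Rightarrow> real) B.
        \<nu>0 \<in> borel_measurable borel \<and> (AE y in \<mu>M. \<bar>\<nu>0 y\<bar> \<le> B) \<and>
        mQn \<nu> P k0 = density \<mu>M (\<lambda>y. ennreal (\<nu>0 y))"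
  \<comment> \<open>(A3) finiteness of C0, C1, C2\<close>
    and A3_C0: "\<exists>C::real. \<forall>x y. ennreal (mu x) + q x y * ennreal (mu y) \<le> ennreal C"
    and A3_C1: "\<exists>C::real. \<forall>y z. (\<integral>\<^sup>+ x. ennreal (mu x * mu y * mu z * p x y z) \<partial>lborel) \<le> ennreal C"
    and A3_C2: "(\<integral>\<^sup>+ x. ennreal (mu x) *
        (SUP z. (\<integral>\<^sup>+ y. ennreal (mu y * hfrak y * mu z * (p x y z + p x z y)) \<partial>lborel)) ^ 2 \<partial>lborel) < \<infinity>"
  \<comment> \<open>(A4) kernel and bandwidths\<close>
    and K_meas: "K \<in> borel_measurable borel"
    and K_bounded: "\<exists>B. \<forall>x. \<bar>K x\<bar> \<le> B"
    and K_int: "integrable lborel K"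
    and K_sq_int: "integrable lborel (\<lambda>x. (K x)\<^sup>2)"
    and K_one: "(\<integral> x. K x \<partial>lborel) = 1"
    and K_tail: "((\<lambda>x. norm x * K x) \<longlongrightarrow> 0) at_infinity"
    and gamma: "0 < \<gamma>" "\<gamma> < 1 / real d"
  \<comment> \<open>(A5) smoothness\<close>
    and s_pos: "s > 0"
    and A5_i_diff: "\<And>j m x. m < nat \<lfloor>s\<rfloor> \<Longrightarrow>
        (\<lambda>t. pdiff j m mu (upd x j t)) differentiable (at (x $ j))"
    and A5_i_L: "0 < L"
    and A5_i_hoelder: "\<And>x t j. \<bar>pdiff j (nat \<lfloor>s\<rfloor>) mu (upd x j t) - pdiff j (nat \<lfloor>s\<rfloor>) mu x\<bar>
        \<le> L * \<bar>x $ j - t\<bar> powr (s - real_of_int \<lfloor>s\<rfloor>)"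
    and A5_ii_moment: "integrable lborel (\<lambda>x. norm x powr s * K x)"
    and A5_ii_vanish: "\<And>x j k. k \<in> {1..nat \<lfloor>s\<rfloor>} \<Longrightarrow>
        integrable lborel (\<lambda>t::real. t ^ k * K (upd x j t)) \<and>
        (\<integral> t. t ^ k * K (upd x j t) \<partial>lborel) = 0"
    and A5_iii: "\<gamma> > 1 / (2 * s + real d)"
  \<comment> \<open>additional condition when alpha > 1/sqrt 2\<close>
    and alpha_cond: "\<alpha> > 1 / sqrt 2 \<Longrightarrow> 2 powr (real d * \<gamma>) > 2 * \<alpha>\<^sup>2"
  shows "\<forall>x. isCont mu x \<longrightarrow> (\<forall>A \<in> {Gen, Tree}. \<forall>\<epsilon>>0.
           (\<lambda>n. measure M {\<omega> \<in> space M. \<bar>mu_hat K h X (A n) n x \<omega> - mu x\<bar> > \<epsilon>})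
              \<longlonglongrightarrow> 0)"
proof (intro allI impI ballI)
  fix x A and \<epsilon> :: real
  assume cont: "isCont mu x" and A: "A \<in> {Gen, Tree}" and \<epsilon>: "\<epsilon> > 0"
  obtain k0 \<nu>0 B\<nu> where \<nu>0: "\<nu>0 \<in> borel_measurable borel" "AE y in \<mu>M. \<bar>\<nu>0 y\<bar> \<le> B\<nu>"
      "mQn \<nu> P k0 = density \<mu>M (\<lambda>y. ennreal (\<nu>0 y))"
    using A2_iv by blast
  obtain BK where BK: "\<And>x. \<bar>K x\<bar> \<le> BK" using K_bounded by blast
  obtain C where C: "\<And>x y. ennreal (mu x) + q x y * ennreal (mu y) \<le> ennreal C" using A3_C0 by blast
  have "prob_space \<mu>M" using A1_inv unfolding Q_invariant_prob_def by blast
  interpret kde_setting P mu p \<nu> k0 \<nu>0 B\<nu> M X K BK "max 0 C" Mc \<alpha> \<gamma> x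
    using bmc[unfolded bmc_def] \<open>prob_space \<mu>M\<close> A1_inv A1_geom \<nu>0[unfolded \<mu>M_def] A2_i C[unfolded q_def]
      A1_alpha gamma cont
    by (intro kde_setting.intro bmc_setting.intro invariant_density_kernel.intro density_kernel.intro
        kde_setting_axioms.intro bmc_setting_axioms.intro invariant_density_kernel_axioms.intro)
       (simp_all add: \<mu>M_def d_def ennreal_max_0 bmc mu_meas mu_nonneg p_meas p_nonneg BK K_meas K_int K_one)
  have "h = bandwidth" unfolding h_def bandwidth_def ..
  then show "(\<lambda>n. measure M {\<omega> \<in> space M. \<bar>mu_hat K h X (A n) n x \<omega> - mu x\<bar> > \<epsilon>}) \<longlonglongrightarrow> 0"
    using A mu_hat_consistent_Gen[OF \<epsilon>] mu_hat_consistent_Tree[OF \<epsilon>] by auto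
qed

end
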